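(* For every $\ell,n_0\in\mathbb N$ there exists a family $(F_1,(a_1,b_1)),\dots,(F_\ell,(a_\ell,b_\ell))$ of edge-rooted graphs, where $F_i$ has $n_i\ge n_0$ vertices, such that: (1) each $F_i$ is rigid; (2) for every $i\in[\ell]$ and every pair of distinct vertices $u,v\in V(F_i)$ there exist $x,y,z\in N_{F_i}(u)\cap N_{F_i}(v)$ with $xy,xz,yz\in E(F_i)$; (3) $N_{F_i}(a_i)\setminus N_{F_i}(b_i)\neq\emptyset$ and $N_{F_i}(b_i)\setminus N_{F_i}(a_i)\ne\emptyset$ for every $i$; (4) $d_{F_i}(a_i)<d_{F_i}(b_i)$ for every $i$; (5) $d_{F_i}(u)<d_{F_j}(v)$ for all $i<j$ in $[\ell]$, $u\in V(F_i)$, $v\in V(F_j)$; (6) for $i,j\in[\ell]$ let $\mathcal D_{i,j}$ be the set of all values $d_{F_i}(u)+d_{F_i}(u')+d_{F_j}(v)+d_{F_j}(v')$, $d_{F_i}(u)+d_{F_i}(u')+d_{F_j}(v)$ and $d_{F_i}(u)+d_{F_j}(v)$ with $u,u'\in V(F_i)$, $v,v'\in V(F_j)$; then $\mathcal D_{i,j}\cap\mathcal D_{i',j'}=\emptyset$ whenever $\{i,j\}\neq\{i',j'\}$; (7) $\bigcup_{i,j\in[\ell]}\mathcal D_{i,j}$ is disjoint from $\{d_{F_t}(w): t\in[\ell], w\in V(F_t)\}$; (8) for every $i\in[\ell]$ there is $S_i\subseteq V(F_i)\setminus\{a_i,b_i\}$ such that $d_{F_i}(u)>d_{F_i}(v)$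 for all $u\in S_i$, $v\in V(F_i)\setminus S_i$; $d_{F_i}(u)\ne d_{F_i}(v)$ for all distinct $u,v\in S_i$; and $N_{F_i}(u)\cap S_i\neq N_{F_i}(v)\cap S_i$ for all distinct $u,v\in V(F_i)\setminus S_i$.
   Context: An edge-rooted graph is a pair $(F,(a,b))$ where $F$ is a finite simple graph and $(a,b)$ is an orientation of an edge $ab\in E(F)$. A graph $F$ is rigid if its only homomorphism to itself (endomorphism) is the identity. $N_F(v)$ and $d_F(v)$ denote neighbourhood and degree. *)

theory Defs
  imports Main
begin

definition simple_graph :: "nat set \<Rightarrow> (nat \<Rightarrow> nat \<Rightarrow> bool) \<Rightarrow> bool" where
  "simple_graph V E \<longleftrightarrow> finite V \<and> (\<forall>u v. E u v \<longrightarrow> u \<in> V \<and> v \<in> V)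
     \<and> (\<forall>u v. E u v \<longrightarrow> E v u) \<and> (\<forall>u. \<not> E u u)"

definition nbhd :: "nat set \<Rightarrow> (nat \<Rightarrow> nat \<Rightarrow> bool) \<Rightarrow> nat \<Rightarrow> nat set" where
  "nbhd V E u = {v \<in> V. E u v}"

definition deg :: "nat set \<Rightarrow> (nat \<Rightarrow> nat \<Rightarrow> bool) \<Rightarrow> nat \<Rightarrow> nat" where
  "deg V E u = card (nbhd V E u)"

definition graph_hom :: "nat set \<Rightarrow> (nat \<Rightarrow> nat \<Rightarrow> bool) \<Rightarrow> nat set \<Rightarrow> (nat \<Rightarrow> nat \<Rightarrow> bool) \<Rightarrow> (nat \<Rightarrow> nat) \<Rightarrow> bool" where
  "graph_hom V E V' E' f \<longleftrightarrow> (\<forall>u\<in>V. f u \<in> V') \<and> (\<forall>u v. E u v \<longrightarrow> E' (f u) (f v))"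

definition rigid :: "nat set \<Rightarrow> (nat \<Rightarrow> nat \<Rightarrow> bool) \<Rightarrow> bool" where
  "rigid V E \<longleftrightarrow> (\<forall>f. graph_hom V E V E f \<longrightarrow> (\<forall>u\<in>V. f u = u))"

definition degsums :: "nat set \<Rightarrow> (nat \<Rightarrow> nat \<Rightarrow> bool) \<Rightarrow> nat set \<Rightarrow> (nat \<Rightarrow> nat \<Rightarrow> bool) \<Rightarrow> nat set" where
  "degsums Vi Ei Vj Ej =
     {deg Vi Ei u + deg Vi Ei u' + deg Vj Ej v + deg Vj Ej v' | u u' v v'. u \<in> Vi \<and> u' \<in> Vi \<and> v \<in> Vj \<and> v' \<in> Vj}
   \<union> {deg Vi Ei u + deg Vi Ei u' + deg Vj Ej v | u u' v. u \<in> Vi \<and> u' \<in> Vi \<and> v \<in> Vj}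
   \<union> {deg Vi Ei u + deg Vj Ej v | u v. u \<in> Vi \<and> v \<in> Vj}"

end

theory Submission
  imports Defs
begin

text \<open>
  For a size parameter \<open>n\<close> the graph \<open>G\<close> is the complement, on \<open>N = 2n\<^sup>2 + 8n + 1\<close> vertices,
  of a sparse graph \<open>H\<close>. The vertices split into \<open>S = [0, 8n)\<close> and \<open>T = [8n, N)\<close>.
  \<open>H\<close> contains the Hamiltonian cycle \<open>0, 1, \<dots>, N - 1\<close> of odd length, and apart from the edge
  \<open>{0, N - 1}\<close> every edge of \<open>H\<close> joins vertices of different parity, so \<open>H\<close> is triangle-free.
  Thus \<open>G\<close> has no independent set of size 3 while its complement has an odd Hamiltonian cycle,
  which forces every endomorphism of \<open>G\<close> to be injective.

  Inside \<open>S\<close>, \<open>H\<close> is a half graph, padded with edges to \<open>T\<close> so that the \<open>S\<close>-vertices get pairwise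
  distinct \<open>H\<close>-degrees of at most \<open>9n\<close>; a band of edges along \<open>T\<close> gives every \<open>T\<close>-vertex
  \<open>H\<close>-degree above \<open>9n\<close>. The \<open>T\<close>-vertices are the cells of two \<open>n \<times> n\<close> grids, each adjacent
  in \<open>H\<close> to the two \<open>S\<close>-vertices naming its row and its column. So in \<open>G\<close> the set \<open>S\<close> has the
  largest, pairwise distinct degrees and its traces separate the other vertices; for an
  injective endomorphism this pins down every vertex, hence \<open>G\<close> is rigid.

  All \<open>H\<close>-degrees are \<open>O(n)\<close>, so the degrees of \<open>G\<close> lie in a window of width \<open>50n\<close> just below
  \<open>N\<close>. Choosing the \<open>i\<close>-th graph with its window at \<open>M \<cdot> 5\<^sup>i\<close>, a sum of at most four degrees
  divided by \<open>M\<close> is \<open>p \<cdot> 5\<^sup>i + q \<cdot> 5\<^sup>j\<close> with \<open>p, q \<in> {1, 2}\<close>, whose nonzero base-5 digits sit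
  exactly at \<open>i\<close> and \<open>j\<close>; this separates the degree-sum sets from each other and from the
  single degrees, which divide to \<open>5\<^sup>t\<close>.
\<close>

section \<open>Endomorphisms and rigidity\<close>

lemma obtain_three_distinct:
  assumes "3 \<le> card A"
  obtains x y z where "x \<in> A" "y \<in> A" "z \<in> A" "x \<noteq> y" "x \<noteq> z" "y \<noteq> z"
proof -
  obtain B where "B \<subseteq> A" "card B = 3"
    using assms obtain_subset_with_card_n by meson
  then show thesis
    using that by (auto simp: card_3_iff)
qed

lemma cyclic_pair_cover:
  fixes N v w :: nat
  assumes "odd N" "v < N" "w < N" "w \<noteq> v"
  obtains k where "k < N div 2" "w \<in> {(v + 1 + 2*k) mod N, (v + 2 + 2*k) mod N}"
proof -
  define d where "d = (w + N - v) mod N"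
  have w_eq: "w = (v + d) mod N"
  proof -
    have "(v + d) mod N = (v + (w + N - v)) mod N"
      unfolding d_def by (simp add: mod_add_right_eq)
    also have "v + (w + N - v) = w + N"
      using \<open>v < N\<close> by simp
    finally show ?thesis using \<open>w < N\<close> by simp
  qed
  have "d \<noteq> 0"
    using w_eq \<open>w \<noteq> v\<close> \<open>v < N\<close> by (metis add_0_right mod_less)
  moreover have "d < N"
    using \<open>v < N\<close> by (simp add: d_def)
  ultimately have "k < N div 2" "d = 1 + 2*k \<or> d = 2 + 2*k" if "k = (d - 1) div 2" for k
    using \<open>odd N\<close> that by presburger+
  then show thesis
    using that w_eq by (metis add.assoc insertCI)
qed

text \<open>A non-surjective endomorphism would map all \<open>N\<close> vertices into the \<open>N div 2\<close> non-edges
  that cover the cycle minus a missed vertex, with at most two vertices over each of them.\<close>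
lemma endomorphism_inj_if_independence_le_2:
  fixes E :: "nat \<Rightarrow> nat \<Rightarrow> bool" and N :: nat
  assumes "odd N"
    and irrefl: "\<And>x. \<not> E x x"
    and sym: "\<And>x y. E x y \<Longrightarrow> E y x"
    and cycle: "\<And>x. x < N \<Longrightarrow> \<not> E x (Suc x mod N)"
    and independence: "\<And>I. I \<subseteq> {..<N} \<Longrightarrow> (\<forall>x\<in>I. \<forall>y\<in>I. \<not> E x y) \<Longrightarrow> card I \<le> 2"
    and hom: "graph_hom {..<N} E {..<N} E f"
  shows "inj_on f {..<N}"
proof (rule ccontr)
  assume not_inj: "\<not> inj_on f {..<N}"
  have into: "f ` {..<N} \<subseteq> {..<N}" and edge: "\<And>x y. E x y \<Longrightarrow> E (f x) (f y)"
    using hom unfolding graph_hom_def by auto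
  have "f ` {..<N} \<noteq> {..<N}"
    using not_inj eq_card_imp_inj_on[of "{..<N}" f] by auto
  then obtain v where "v < N" "v \<notin> f ` {..<N}"
    using into by blast
  define pair where "pair k = {(v + 1 + 2*k) mod N, (v + 2 + 2*k) mod N}" for k
  define fiber where "fiber k = {x. x < N \<and> f x \<in> pair k}" for k
  have pair_nonadj: "\<not> E p q" if "p \<in> pair k" "q \<in> pair k" for p q k
  proof -
    have "Suc ((v + 1 + 2*k) mod N) mod N = (v + 2 + 2*k) mod N"
      by (simp add: mod_Suc_eq)
    moreover have "(v + 1 + 2*k) mod N < N"
      using \<open>v < N\<close> by simp
    ultimately have "\<not> E ((v + 1 + 2*k) mod N) ((v + 2 + 2*k) mod N)"
      using cycle by metis
    then show ?thesis
      using that irrefl sym unfolding pair_def by blast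
  qed
  have fiber_independent: "\<forall>x\<in>fiber k. \<forall>y\<in>fiber k. \<not> E x y" for k
    using edge pair_nonadj unfolding fiber_def by blast
  have "{..<N} \<subseteq> (\<Union>k<N div 2. fiber k)"
  proof
    fix x assume "x \<in> {..<N}"
    moreover have "f x < N" "f x \<noteq> v"
      using \<open>x \<in> {..<N}\<close> into \<open>v \<notin> f ` {..<N}\<close> by auto
    ultimately show "x \<in> (\<Union>k<N div 2. fiber k)"
      using cyclic_pair_cover[OF \<open>odd N\<close> \<open>v < N\<close>, of "f x"] unfolding fiber_def pair_def by blast
  qed
  then have "N \<le> card (\<Union>k<N div 2. fiber k)"
    using card_mono[of "\<Union>k<N div 2. fiber k" "{..<N}"] by (simp add: fiber_def)
  also have "\<dots> \<le> (\<Sum>k<N div 2. card (fiber k))"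
    by (rule card_UN_le) simp
  also have "\<dots> \<le> (\<Sum>k<N div 2. 2)"
    using fiber_independent by (intro sum_mono independence) (auto simp: fiber_def)
  also have "\<dots> < N"
    using \<open>odd N\<close> by simp presburger
  finally show False by simp
qed

lemma inj_endomorphism_nbhd:
  assumes "simple_graph V E" "graph_hom V E V E f" "inj_on f V" "x \<in> V"
  shows "nbhd V E (f x) = f ` nbhd V E x"
proof -
  have "finite V"
    using assms(1) by (simp add: simple_graph_def)
  have into: "f ` V \<subseteq> V" and edge: "\<And>x y. E x y \<Longrightarrow> E (f x) (f y)"
    using assms(2) unfolding graph_hom_def by auto
  have onto: "f ` V = V"
    using card_subset_eq[OF \<open>finite V\<close> into] card_image[OF assms(3)] by simp
  have image_sub: "f ` nbhd V E y \<subseteq> nbhd V E (f y)" if "y \<in> V" for y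
    using into edge that unfolding nbhd_def by auto
  have card_image_nbhd: "card (f ` nbhd V E y) = deg V E y" for y
    unfolding deg_def by (rule card_image, rule inj_on_subset[OF assms(3)]) (auto simp: nbhd_def)
  have finite_nbhd: "finite (nbhd V E y)" for y
    using \<open>finite V\<close> unfolding nbhd_def by simp
  have deg_le: "deg V E y \<le> deg V E (f y)" if "y \<in> V" for y
    using card_mono[OF finite_nbhd image_sub[OF that]] card_image_nbhd[of y]
    unfolding deg_def[of V E "f y"] by simp
  have "(\<Sum>y\<in>V. deg V E (f y)) = (\<Sum>y\<in>V. deg V E y)"
    using sum.reindex[OF assms(3), of "deg V E"] onto by simp
  then have "deg V E x = deg V E (f x)"
    by (rule sum_mono_inv[OF sym deg_le assms(4) \<open>finite V\<close>])
  then have "card (f ` nbhd V E x) = card (nbhd V E (f x))"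
    unfolding card_image_nbhd by (simp add: deg_def)
  then show ?thesis
    by (rule card_subset_eq[OF finite_nbhd image_sub[OF assms(4)], symmetric])
qed

text \<open>An injective endomorphism preserves degrees, so the degree conditions force it to fix \<open>S\<close>
  pointwise; the traces \<open>N(u) \<inter> S\<close> then pin down the remaining vertices.\<close>
lemma rigid_if_inj_endomorphisms:
  assumes sg: "simple_graph V E"
    and inj: "\<And>f. graph_hom V E V E f \<Longrightarrow> inj_on f V"
    and "S \<subseteq> V"
    and deg_gt: "\<And>u v. u \<in> S \<Longrightarrow> v \<in> V - S \<Longrightarrow> deg V E u > deg V E v"
    and deg_inj: "\<And>u v. u \<in> S \<Longrightarrow> v \<in> S \<Longrightarrow> u \<noteq> v \<Longrightarrow> deg V E u \<noteq> deg V E v"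
    and trace_inj: "\<And>u v. u \<in> V - S \<Longrightarrow> v \<in> V - S \<Longrightarrow> u \<noteq> v \<Longrightarrow>
                      nbhd V E u \<inter> S \<noteq> nbhd V E v \<inter> S"
  shows "rigid V E"
  unfolding rigid_def
proof (intro allI impI ballI)
  fix f u assume hom: "graph_hom V E V E f" and "u \<in> V"
  have into: "\<And>x. x \<in> V \<Longrightarrow> f x \<in> V"
    using hom unfolding graph_hom_def by auto
  have inj_f: "inj_on f V"
    using inj[OF hom] .
  have nbhd_f: "nbhd V E (f x) = f ` nbhd V E x" if "x \<in> V" for x
    using inj_endomorphism_nbhd[OF sg hom inj_f that] .
  have deg_f: "deg V E (f x) = deg V E x" if "x \<in> V" for x
    unfolding deg_def nbhd_f[OF that]
    by (rule card_image, rule inj_on_subset[OF inj_f]) (auto simp: nbhd_def)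
  have fix_S: "f x = x" if "x \<in> S" for x
  proof -
    have "x \<in> V"
      using that \<open>S \<subseteq> V\<close> by blast
    have "f x \<in> S"
    proof (rule ccontr)
      assume "f x \<notin> S"
      then have "deg V E (f x) < deg V E x"
        using deg_gt[OF that] into[OF \<open>x \<in> V\<close>] by blast
      then show False
        using deg_f[OF \<open>x \<in> V\<close>] by simp
    qed
    show ?thesis
    proof (rule ccontr)
      assume "f x \<noteq> x"
      then show False
        using deg_inj[OF \<open>f x \<in> S\<close> that] deg_f[OF \<open>x \<in> V\<close>] by simp
    qed
  qed
  have outside_S: "f x \<notin> S" if "x \<in> V - S" for x
  proof
    assume "f x \<in> S"
    then have "f (f x) = f x"
      by (rule fix_S)
    then have "f x = x"
      using inj_onD[OF inj_f] into that by blast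
    then show False
      using \<open>f x \<in> S\<close> that by simp
  qed
  show "f u = u"
  proof (cases "u \<in> S")
    case False
    have "f ` nbhd V E u \<inter> S = nbhd V E u \<inter> S"
    proof
      show "f ` nbhd V E u \<inter> S \<subseteq> nbhd V E u \<inter> S"
      proof
        fix y assume "y \<in> f ` nbhd V E u \<inter> S"
        then obtain x where "x \<in> nbhd V E u" "y = f x" "f x \<in> S"
          by blast
        moreover have "x \<in> V"
          using \<open>x \<in> nbhd V E u\<close> by (simp add: nbhd_def)
        ultimately have "x \<in> S"
          using outside_S[of x] by blast
        then show "y \<in> nbhd V E u \<inter> S"
          using fix_S[of x] \<open>x \<in> nbhd V E u\<close> \<open>y = f x\<close> by simp
      qed
      show "nbhd V E u \<inter> S \<subseteq> f ` nbhd V E u \<inter> S"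
      proof
        fix y assume "y \<in> nbhd V E u \<inter> S"
        then show "y \<in> f ` nbhd V E u \<inter> S"
          using rev_image_eqI[of y "nbhd V E u" y f] fix_S[of y] by simp
      qed
    qed
    then have "nbhd V E (f u) \<inter> S = nbhd V E u \<inter> S"
      using nbhd_f[OF \<open>u \<in> V\<close>] by simp
    moreover have "f u \<in> V - S" "u \<in> V - S"
      using outside_S[of u] into[OF \<open>u \<in> V\<close>] \<open>u \<in> V\<close> False by auto
    ultimately show ?thesis
      using trace_inj by blast
  qed (rule fix_S)
qed

lemma nbhd_diff_nonempty_if_edge:
  assumes "simple_graph V E" "E a b"
  shows "nbhd V E a - nbhd V E b \<noteq> {} \<and> nbhd V E b - nbhd V E a \<noteq> {}"
proof -
  have "b \<in> nbhd V E a - nbhd V E b" "a \<in> nbhd V E b - nbhd V E a"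
    using assms unfolding simple_graph_def nbhd_def by auto
  then show ?thesis by blast
qed

section \<open>The sparse graph \<open>H\<close> and its complement \<open>G\<close>\<close>

definition nverts :: "nat \<Rightarrow> nat" where "nverts n = 2*n*n + 8*n + 1"

definition band :: "nat \<Rightarrow> nat" where "band n = 9*n + 1"

definition cell :: "nat \<Rightarrow> nat \<Rightarrow> nat" where "cell n t = (t - 8*n) div 2"

text \<open>A \<open>T\<close>-vertex \<open>t\<close> is the cell \<open>cell n t\<close> of an \<open>n \<times> n\<close> grid, one grid for each parity of
  \<open>t - 8*n\<close>; it is joined to the \<open>S\<close>-vertices in \<open>[4n, 8n)\<close> of the opposite parity that name its
  row and its column. The edges from \<open>s < 4*n\<close> are padding that makes the \<open>H\<close>-degrees in \<open>S\<close>
  pairwise distinct.\<close>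
definition code_edge :: "nat \<Rightarrow> nat \<Rightarrow> nat \<Rightarrow> bool" where
  "code_edge n s t \<longleftrightarrow>
     (odd s \<and> 4*n < s \<and> even (t - 8*n) \<and> cell n t < n*n \<and>
        (s = 4*n + 1 + 2*(cell n t div n) \<or> s = 8*n - 1 - 2*(cell n t mod n)))
   \<or> (even s \<and> 4*n \<le> s \<and> odd (t - 8*n) \<and> cell n t < n*n \<and>
        (s = 4*n + 2*(cell n t div n) \<or> s = 6*n + 2*(cell n t mod n)))
   \<or> (odd s \<and> s < 4*n \<and> even (t - 8*n) \<and> cell n t < 3*n)
   \<or> (even s \<and> 2 \<le> s \<and> s < 4*n \<and> odd (t - 8*n) \<and> cell n t < 7*n)"

definition H_arc :: "nat \<Rightarrow> nat \<Rightarrow> nat \<Rightarrow> bool" where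
  "H_arc n u v \<longleftrightarrow>
     (odd u \<and> even v \<and> u < 8*n \<and> v < 8*n \<and> u \<le> v + 1)
   \<or> (8*n \<le> u \<and> u < v \<and> odd (v - u) \<and> v - u < 2 * band n)
   \<or> (u = 0 \<and> v = nverts n - 1)
   \<or> (u < 8*n \<and> 8*n \<le> v \<and> code_edge n u v)"

definition H_edge :: "nat \<Rightarrow> nat \<Rightarrow> nat \<Rightarrow> bool" where
  "H_edge n u v \<longleftrightarrow> u < nverts n \<and> v < nverts n \<and> (H_arc n u v \<or> H_arc n v u)"

definition G_edge :: "nat \<Rightarrow> nat \<Rightarrow> nat \<Rightarrow> bool" where
  "G_edge n u v \<longleftrightarrow> u < nverts n \<and> v < nverts n \<and> u \<noteq> v \<and> \<not> H_edge n u v"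

abbreviation H_nbrs :: "nat \<Rightarrow> nat \<Rightarrow> nat set" where
  "H_nbrs n u \<equiv> {v. v < nverts n \<and> H_edge n u v}"

definition H_deg :: "nat \<Rightarrow> nat \<Rightarrow> nat" where
  "H_deg n u = card (H_nbrs n u)"

abbreviation half_graph_nbrs :: "nat \<Rightarrow> nat \<Rightarrow> nat set" where
  "half_graph_nbrs n s \<equiv> {v. v < 8*n \<and> ((odd s \<and> even v \<and> s \<le> v + 1) \<or> (odd v \<and> even s \<and> v \<le> s + 1))}"

abbreviation code_nbrs :: "nat \<Rightarrow> nat \<Rightarrow> nat set" where
  "code_nbrs n s \<equiv> {t. 8*n \<le> t \<and> t < nverts n \<and> code_edge n s t}"

lemma nverts_bounds: "8*n < nverts n" "odd (nverts n)"
  unfolding nverts_def by auto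

lemma H_edge_sym: "H_edge n u v \<Longrightarrow> H_edge n v u"
  unfolding H_edge_def by auto

lemma H_arc_irrefl: "1 \<le> n \<Longrightarrow> \<not> H_arc n u u"
  unfolding H_arc_def nverts_def by auto

lemma H_edge_irrefl: "1 \<le> n \<Longrightarrow> \<not> H_edge n u u"
  unfolding H_edge_def using H_arc_irrefl by auto

lemma code_edge_odd_sum:
  assumes "code_edge n s t" "8*n \<le> t"
  shows "odd (s + t)"
proof -
  have "odd (s + (t - 8*n))"
    using assms(1) unfolding code_edge_def by (elim disjE conjE) simp_all
  then show ?thesis using assms(2) by (simp add: even_add even_diff_nat)
qed

lemma H_arc_odd_sum:
  assumes "H_arc n u v"
  shows "odd (u + v) \<or> (u = 0 \<and> v = nverts n - 1)"
  using assms unfolding H_arc_def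
proof (elim disjE conjE)
  assume "8*n \<le> u" "u < v" "odd (v - u)" "v - u < 2 * band n"
  then show ?thesis by (simp add: even_add even_diff_nat)
next
  assume "u < 8*n" "8*n \<le> v" "code_edge n u v"
  then show ?thesis using code_edge_odd_sum by blast
qed auto

lemma H_edge_odd_sum: "H_edge n u v \<Longrightarrow> odd (u + v) \<or> {u, v} = {0, nverts n - 1}"
proof -
  assume "H_edge n u v"
  then have "H_arc n u v \<or> H_arc n v u" unfolding H_edge_def by simp
  then show ?thesis
  proof
    assume "H_arc n u v" then show ?thesis using H_arc_odd_sum[of n u v] by auto
  next
    assume "H_arc n v u"
    then have "odd (v + u) \<or> (v = 0 \<and> u = nverts n - 1)" by (rule H_arc_odd_sum)
    then show ?thesis by (auto simp: add.commute insert_commute)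
  qed
qed

lemma no_code_edge_0: "1 \<le> n \<Longrightarrow> \<not> code_edge n 0 t"
  unfolding code_edge_def by auto

lemma H_edge_0_iff:
  assumes "1 \<le> n"
  shows "H_edge n 0 v \<longleftrightarrow> v = 1 \<or> v = nverts n - 1"
proof -
  have a: "H_arc n 0 v \<longleftrightarrow> v = nverts n - 1" unfolding H_arc_def
    using no_code_edge_0[OF assms] assms nverts_bounds[of n] by (auto simp: nverts_def)
  have b: "H_arc n v 0 \<longleftrightarrow> v = 1"
  proof
    assume "H_arc n v 0"
    then have "odd v \<and> v \<le> 1" unfolding H_arc_def
      using assms nverts_bounds[of n] by (auto simp: nverts_def)
    then show "v = 1" by presburger
  next
    assume "v = 1" then show "H_arc n v 0" unfolding H_arc_def using assms by simp
  qed
  show ?thesis unfolding H_edge_def a b using nverts_bounds[of n] assms by auto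
qed

lemma no_H_edge_last_1:
  assumes "3 \<le> n"
  shows "\<not> H_edge n (nverts n - 1) 1"
proof -
  have e: "nverts n - 1 - 8*n = 2*n*n" unfolding nverts_def by simp
  have j: "cell n (nverts n - 1) = n*n" unfolding cell_def e by simp
  have "n*n \<ge> 3*n" using assms by simp
  then have "\<not> code_edge n 1 (nverts n - 1)" unfolding code_edge_def j e using assms by simp
  moreover have "nverts n - 1 \<noteq> 0" "\<not> nverts n - 1 < 8 * n" "1 < 8*n"
    using nverts_bounds[of n] assms by auto
  ultimately have "\<not> H_arc n (nverts n - 1) 1" "\<not> H_arc n 1 (nverts n - 1)"
    unfolding H_arc_def by auto
  then show ?thesis unfolding H_edge_def by simp
qed

lemma H_edge_cycle:
  assumes "1 \<le> n" "x < nverts n"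
  shows "H_edge n x (Suc x mod nverts n)"
proof -
  consider "x < 8*n - 1" | "x = 8*n - 1" | "8*n \<le> x" "x < nverts n - 1" | "x = nverts n - 1"
    using assms by linarith
  then show ?thesis
  proof cases
    case 1
    then have "Suc x mod nverts n = Suc x" using nverts_bounds[of n] by simp
    moreover have "H_arc n x (Suc x) \<or> H_arc n (Suc x) x"
      using 1 unfolding H_arc_def by (cases "odd x") auto
    ultimately show ?thesis using 1 nverts_bounds[of n] unfolding H_edge_def by auto
  next
    case 2
    then have s: "Suc x mod nverts n = 8*n" using nverts_bounds[of n] assms by simp
    have "odd (8*n - 1)" using assms by presburger
    moreover have "4 * n < 8 * n - 1" using assms by simp
    ultimately have "code_edge n x (8*n)" unfolding code_edge_def cell_def 2 using assms by simp
    then have "H_arc n x (8*n)" unfolding H_arc_def using 2 assms by auto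
    then show ?thesis using s assms nverts_bounds[of n] unfolding H_edge_def by auto
  next
    case 3
    then have "Suc x mod nverts n = Suc x" by simp
    moreover have "H_arc n x (Suc x)" using 3 unfolding H_arc_def band_def by simp
    ultimately show ?thesis using 3 unfolding H_edge_def by auto
  next
    case 4
    then have "Suc x mod nverts n = 0" using nverts_bounds[of n] by simp
    moreover have "H_arc n 0 x" using 4 unfolding H_arc_def by simp
    moreover have "x < nverts n" "0 < nverts n" using assms by auto
    ultimately show ?thesis unfolding H_edge_def by simp
  qed
qed

lemma no_common_H_nbr_0_last:
  assumes "3 \<le> n" "H_edge n 0 z" "H_edge n (nverts n - 1) z"
  shows False
proof -
  have "z = 1 \<or> z = nverts n - 1" using H_edge_0_iff assms(1,2) by auto
  then show False using no_H_edge_last_1[OF assms(1)] H_edge_irrefl[of n] assms(1,3) by auto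
qed

lemma no_H_triangle_through_0_last:
  assumes "3 \<le> n" "{a, b} = {0, nverts n - 1}" "H_edge n a c" "H_edge n b c"
  shows False
proof -
  have "(a = 0 \<and> b = nverts n - 1) \<or> (a = nverts n - 1 \<and> b = 0)"
    using assms(2) by (auto simp: doubleton_eq_iff)
  then show False
  proof
    assume "a = 0 \<and> b = nverts n - 1"
    then show False
      using no_common_H_nbr_0_last[OF assms(1)] assms(3,4) by auto
  next
    assume "a = nverts n - 1 \<and> b = 0"
    then show False
      using no_common_H_nbr_0_last[OF assms(1)] assms(3,4) by auto
  qed
qed

text \<open>Apart from \<open>{0, nverts n - 1}\<close>, every edge of \<open>H\<close> joins vertices of different parity,
  so a triangle would have to use that edge and a common neighbour of its ends.\<close>
lemma H_triangle_free:
  assumes "3 \<le> n" "H_edge n x y" "H_edge n x z" "H_edge n y z"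
  shows False
proof -
  have "even (x + y) \<or> even (x + z) \<or> even (y + z)"
    by presburger
  then consider "even (x + y)" | "even (x + z)" | "even (y + z)"
    by blast
  then show False
  proof cases
    case 1
    then have "{x, y} = {0, nverts n - 1}"
      using H_edge_odd_sum[OF assms(2)] by simp
    then show False
      using no_H_triangle_through_0_last[OF assms(1) _ assms(3,4)] by simp
  next
    case 2
    then have "{x, z} = {0, nverts n - 1}"
      using H_edge_odd_sum[OF assms(3)] by simp
    then show False
      using no_H_triangle_through_0_last[OF assms(1) _ assms(2) H_edge_sym[OF assms(4)]] by simp
  next
    case 3
    then have "{y, z} = {0, nverts n - 1}"
      using H_edge_odd_sum[OF assms(4)] by simp
    then show False
      using no_H_triangle_through_0_last[OF assms(1) _ H_edge_sym[OF assms(2)] H_edge_sym[OF assms(3)]] by simp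
  qed
qed

section \<open>Degrees in \<open>H\<close>\<close>

lemma card_even_less: "card {v::nat. v < b \<and> even v} = (b + 1) div 2"
proof (induction b)
  case 0 then show ?case by simp
next
  case (Suc b)
  show ?case
  proof (cases "even b")
    case True
    then have "{v. v < Suc b \<and> even v} = insert b {v. v < b \<and> even v}"
      by (auto simp: less_Suc_eq)
    then have "card {v. v < Suc b \<and> even v} = Suc (card {v. v < b \<and> even v})" by simp
    then show ?thesis using Suc True by presburger
  next
    case False
    then have "{v. v < Suc b \<and> even v} = {v. v < b \<and> even v}" by (auto simp: less_Suc_eq)
    then show ?thesis using Suc False by presburger
  qed
qed

lemma card_odd_less: "card {v::nat. v < b \<and> odd v} = b div 2"
proof (induction b)
  case 0 then show ?case by simp
next
  case (Suc b)
  show ?case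
  proof (cases "odd b")
    case True
    then have "{v. v < Suc b \<and> odd v} = insert b {v. v < b \<and> odd v}"
      by (auto simp: less_Suc_eq)
    then have "card {v. v < Suc b \<and> odd v} = Suc (card {v. v < b \<and> odd v})" by simp
    then show ?thesis using Suc True by presburger
  next
    case False
    then have "{v. v < Suc b \<and> odd v} = {v. v < b \<and> odd v}" by (auto simp: less_Suc_eq)
    then show ?thesis using Suc False by presburger
  qed
qed

lemma T_even_image: "{t. 8*n \<le> t \<and> t < nverts n \<and> even (t - 8*n) \<and> P (cell n t)} = (\<lambda>j. 8*n + 2*j) ` {j. j \<le> n*n \<and> P j}"
proof (rule set_eqI, rule iffI)
  fix t assume t: "t \<in> {t. 8*n \<le> t \<and> t < nverts n \<and> even (t - 8*n) \<and> P (cell n t)}"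
  then have "t = 8*n + 2 * cell n t" "cell n t \<le> n*n" unfolding cell_def nverts_def by auto
  then show "t \<in> (\<lambda>j. 8*n + 2*j) ` {j. j \<le> n*n \<and> P j}"
    using t by (intro image_eqI[of _ _ "cell n t"]) auto
next
  fix t assume "t \<in> (\<lambda>j. 8*n + 2*j) ` {j. j \<le> n*n \<and> P j}"
  then obtain j where j: "t = 8*n + 2*j" "j \<le> n*n" "P j" by auto
  have "cell n t = j" unfolding cell_def j by simp
  then show "t \<in> {t. 8*n \<le> t \<and> t < nverts n \<and> even (t - 8*n) \<and> P (cell n t)}"
    using j unfolding nverts_def by auto
qed

lemma T_odd_image: "{t. 8*n \<le> t \<and> t < nverts n \<and> odd (t - 8*n) \<and> P (cell n t)} = (\<lambda>j. 8*n + 1 + 2*j) ` {j. j < n*n \<and> P j}"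
proof (rule set_eqI, rule iffI)
  fix t assume t: "t \<in> {t. 8*n \<le> t \<and> t < nverts n \<and> odd (t - 8*n) \<and> P (cell n t)}"
  obtain m where m: "m = n*n" by simp
  have "t - 8*n < 2*m + 1" "odd (t - 8*n)" "8*n \<le> t" using t m unfolding nverts_def by auto
  then have "t = 8*n + 1 + 2 * cell n t" "cell n t < n*n"
    unfolding cell_def m[symmetric] by presburger+
  then show "t \<in> (\<lambda>j. 8*n + 1 + 2*j) ` {j. j < n*n \<and> P j}"
    using t by (intro image_eqI[of _ _ "cell n t"]) auto
next
  fix t assume "t \<in> (\<lambda>j. 8*n + 1 + 2*j) ` {j. j < n*n \<and> P j}"
  then obtain j where j: "t = 8*n + 1 + 2*j" "j < n*n" "P j" by auto
  have "cell n t = j" unfolding cell_def j by simp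
  then show "t \<in> {t. 8*n \<le> t \<and> t < nverts n \<and> odd (t - 8*n) \<and> P (cell n t)}"
    using j unfolding nverts_def by auto
qed

lemma card_T_even: "card {t. 8*n \<le> t \<and> t < nverts n \<and> even (t - 8*n) \<and> P (cell n t)} = card {j. j \<le> n*n \<and> P j}"
  unfolding T_even_image by (rule card_image) (auto simp: inj_on_def)

lemma card_T_odd: "card {t. 8*n \<le> t \<and> t < nverts n \<and> odd (t - 8*n) \<and> P (cell n t)} = card {j. j < n*n \<and> P j}"
  unfolding T_odd_image by (rule card_image) (auto simp: inj_on_def)

lemma card_grid_row:
  assumes "a < n"
  shows "card {j. j < n*n \<and> j div n = a} = n"
proof -
  have "{j. j < n*n \<and> j div n = a} = (\<lambda>b. a*n + b) ` {..<n}"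
  proof (rule set_eqI, rule iffI)
    fix j assume j: "j \<in> {j. j < n*n \<and> j div n = a}"
    then have "j = a*n + j mod n" using div_mult_mod_eq[of j n] by simp
    moreover have "j mod n < n" using assms by simp
    ultimately show "j \<in> (\<lambda>b. a*n + b) ` {..<n}"
      by (intro image_eqI[of _ _ "j mod n"]) auto
  next
    fix j assume "j \<in> (\<lambda>b. a*n + b) ` {..<n}"
    then obtain b where b: "j = a*n + b" "b < n" by auto
    have "j div n = a" using b by simp
    moreover have "j < n*n"
    proof -
      have "a*n + b < a*n + n" using b by simp
      also have "\<dots> = (a+1)*n" by simp
      also have "\<dots> \<le> n*n" using assms by (intro mult_right_mono) auto
      finally show ?thesis using b by simp
    qed
    ultimately show "j \<in> {j. j < n*n \<and> j div n = a}" by simp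
  qed
  then show ?thesis by (simp add: card_image inj_on_def)
qed

lemma card_grid_col:
  assumes "b < n"
  shows "card {j. j < n*n \<and> j mod n = b} = n"
proof -
  have "{j. j < n*n \<and> j mod n = b} = (\<lambda>a. a*n + b) ` {..<n}"
  proof (rule set_eqI, rule iffI)
    fix j assume j: "j \<in> {j. j < n*n \<and> j mod n = b}"
    then have "j = (j div n)*n + b" using div_mult_mod_eq[of j n] by simp
    moreover have "j div n < n" using j by (simp add: less_mult_imp_div_less)
    ultimately show "j \<in> (\<lambda>a. a*n + b) ` {..<n}"
      by (intro image_eqI[of _ _ "j div n"]) auto
  next
    fix j assume "j \<in> (\<lambda>a. a*n + b) ` {..<n}"
    then obtain a where a: "j = a*n + b" "a < n" by auto
    have "j mod n = b" using a assms by simp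
    moreover have "j < n*n"
    proof -
      have "a*n + b < a*n + n" using assms by simp
      also have "\<dots> = (a+1)*n" by simp
      also have "\<dots> \<le> n*n" using a by (intro mult_right_mono) auto
      finally show ?thesis using a by simp
    qed
    ultimately show "j \<in> {j. j < n*n \<and> j mod n = b}" by simp
  qed
  moreover have "inj_on (\<lambda>a. a*n + b) {..<n}" using assms by (auto simp: inj_on_def)
  ultimately show ?thesis by (simp add: card_image)
qed

lemma grid_div_less:
  fixes j n :: nat
  assumes "j < n*n"
  shows "j div n < n"
  using assms by (simp add: less_mult_imp_div_less)

lemma grid_mod_less:
  fixes j n :: nat
  assumes "j < n*n"
  shows "j mod n < n"
  using assms by (metis mod_less_divisor mult_0_right neq0_conv not_less0)

lemma H_edge_S_S:
  assumes "s < 8*n" "v < 8*n"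
  shows "H_edge n s v \<longleftrightarrow> (odd s \<and> even v \<and> s \<le> v + 1) \<or> (odd v \<and> even s \<and> v \<le> s + 1)"
proof -
  have lt: "s < nverts n" "v < nverts n" "s \<noteq> nverts n - 1" "v \<noteq> nverts n - 1"
    using assms nverts_bounds[of n] by auto
  show ?thesis unfolding H_edge_def H_arc_def using assms lt by auto
qed

lemma H_edge_S_T:
  assumes "s < 8*n" "8*n \<le> v" "v < nverts n"
  shows "H_edge n s v \<longleftrightarrow> code_edge n s v \<or> (s = 0 \<and> v = nverts n - 1)"
proof -
  have lt: "s < nverts n" using assms nverts_bounds[of n] by auto
  have "\<not> H_arc n v s" unfolding H_arc_def using assms by auto
  moreover have "H_arc n s v \<longleftrightarrow> code_edge n s v \<or> (s = 0 \<and> v = nverts n - 1)" unfolding H_arc_def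
    using assms by auto
  ultimately show ?thesis unfolding H_edge_def using lt assms by auto
qed

lemma H_nbrs_S:
  assumes "1 \<le> n" "s < 8*n"
  shows "H_nbrs n s = half_graph_nbrs n s \<union> code_nbrs n s \<union> (if s = 0 then {nverts n - 1} else {})"
proof (rule set_eqI)
  fix v
  have g: "8*n < nverts n" "8 * n \<le> nverts n - 1" using nverts_bounds[of n] by auto
  show "v \<in> H_nbrs n s \<longleftrightarrow> v \<in> half_graph_nbrs n s \<union> code_nbrs n s \<union> (if s = 0 then {nverts n - 1} else {})"
  proof (cases "v < 8*n")
    case True
    then show ?thesis using H_edge_S_S[OF assms(2) True] g by auto
  next
    case False
    then show ?thesis using H_edge_S_T[OF assms(2), of v] g by auto
  qed
qed

lemma card_half_graph_nbrs_odd: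
  assumes "odd s" "s < 8*n"
  shows "card (half_graph_nbrs n s) = 4*n - s div 2"
proof -
  have "half_graph_nbrs n s
      = {v. v < 8*n \<and> even v} - {v. v < s - 1 \<and> even v}" using assms by auto
  moreover have "{v. v < s - 1 \<and> even v} \<subseteq> {v. v < 8*n \<and> even v}"
    using assms by auto
  moreover have "card {v. v < 8*n \<and> even v} = 4*n" using card_even_less[of "8*n"] by simp
  moreover have "card {v. v < s - 1 \<and> even v} = s div 2" using card_even_less[of "s - 1"] assms
    by (metis One_nat_def Suc_pred' add.commute odd_pos plus_1_eq_Suc)
  ultimately show ?thesis by (simp add: card_Diff_subset)
qed

lemma card_half_graph_nbrs_even:
  assumes "even s" "s < 8*n"
  shows "card (half_graph_nbrs n s) = (s + 2) div 2"
proof -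
  have "s + 2 \<le> 8*n" using assms by presburger
  then have "half_graph_nbrs n s
      = {v. v < s + 2 \<and> odd v}" using assms by auto
  then show ?thesis using card_odd_less[of "s+2"] by simp
qed

lemma H_deg_S_split:
  assumes "1 \<le> n" "s < 8*n"
  shows "H_deg n s = card (half_graph_nbrs n s) + card (code_nbrs n s) + (if s = 0 then 1 else 0)"
proof -
  let ?A = "half_graph_nbrs n s"
  let ?B = "code_nbrs n s"
  let ?W = "(if s = 0 then {nverts n - 1} else {})"
  have fA: "finite ?A" by auto
  have fB: "finite ?B" by auto
  have d1: "?A \<inter> ?B = {}" by auto
  have d2: "(?A \<union> ?B) \<inter> ?W = {}"
    using no_code_edge_0[OF assms(1)] nverts_bounds[of n] by auto
  have "H_deg n s = card (?A \<union> ?B \<union> ?W)" unfolding H_deg_def H_nbrs_S[OF assms] ..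
  also have "\<dots> = card (?A \<union> ?B) + card ?W"
    using d2 fA fB by (intro card_Un_disjoint) auto
  also have "card (?A \<union> ?B) = card ?A + card ?B"
    using d1 fA fB by (intro card_Un_disjoint) auto
  finally show ?thesis by simp
qed

lemma code_edge_odd_row:
  assumes "odd s" "4*n < s" "s < 6*n"
  shows "code_edge n s t \<longleftrightarrow> even (t - 8*n) \<and> cell n t < n*n \<and> cell n t div n = (s - 4*n - 1) div 2"
proof -
  have k1: "\<And>r. r < n \<Longrightarrow> s \<noteq> 8*n - 1 - 2*r" using assms by arith
  have k2: "\<And>q. s = 4*n + 1 + 2*q \<longleftrightarrow> q = (s - 4*n - 1) div 2"
  proof -
    fix q
    have "\<exists>d. s = 4*n + 1 + 2*d" using assms by presburger
    then obtain d where d: "s = 4*n + 1 + 2*d" by blast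
    show "s = 4*n + 1 + 2*q \<longleftrightarrow> q = (s - 4*n - 1) div 2" using d by auto
  qed
  have k: "\<And>q r. r < n \<Longrightarrow> (s = 4*n + 1 + 2*q \<or> s = 8*n - 1 - 2*r) \<longleftrightarrow> q = (s - 4*n - 1) div 2"
    using k1 k2 by blast
  have "cell n t < n*n \<Longrightarrow> (s = 4*n + 1 + 2*(cell n t div n) \<or> s = 8*n - 1 - 2*(cell n t mod n)) \<longleftrightarrow> cell n t div n = (s - 4*n - 1) div 2"
    using k grid_mod_less by blast
  then show ?thesis unfolding code_edge_def using assms by auto
qed

lemma code_edge_odd_col:
  assumes "odd s" "6*n < s" "s < 8*n"
  shows "code_edge n s t \<longleftrightarrow> even (t - 8*n) \<and> cell n t < n*n \<and> cell n t mod n = (8*n - 1 - s) div 2"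
proof -
  have k1: "\<And>q. q < n \<Longrightarrow> s \<noteq> 4*n + 1 + 2*q" using assms by arith
  have k2: "\<And>r. s = 8*n - 1 - 2*r \<longleftrightarrow> r = (8*n - 1 - s) div 2"
  proof -
    fix r
    have "\<exists>d. 8*n - 1 - s = 2*d" using assms by presburger
    then obtain d where d: "8*n - 1 - s = 2*d" by blast
    have "s = 8*n - 1 - 2*d" using d assms by arith
    then show "s = 8*n - 1 - 2*r \<longleftrightarrow> r = (8*n - 1 - s) div 2"
      using d assms by auto
  qed
  have k: "\<And>q r. q < n \<Longrightarrow> (s = 4*n + 1 + 2*q \<or> s = 8*n - 1 - 2*r) \<longleftrightarrow> r = (8*n - 1 - s) div 2"
    using k1 k2 by blast
  have "cell n t < n*n \<Longrightarrow> (s = 4*n + 1 + 2*(cell n t div n) \<or> s = 8*n - 1 - 2*(cell n t mod n)) \<longleftrightarrow> cell n t mod n = (8*n - 1 - s) div 2"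
    using k grid_div_less by blast
  moreover have "4*n < s" using assms by simp
  ultimately show ?thesis unfolding code_edge_def using assms by auto
qed

lemma code_edge_even_row:
  assumes "even s" "4*n \<le> s" "s < 6*n"
  shows "code_edge n s t \<longleftrightarrow> odd (t - 8*n) \<and> cell n t < n*n \<and> cell n t div n = (s - 4*n) div 2"
proof -
  have k: "\<And>q r. r < n \<Longrightarrow> (s = 4*n + 2*q \<or> s = 6*n + 2*r) \<longleftrightarrow> q = (s - 4*n) div 2"
    using assms by presburger
  have "cell n t < n*n \<Longrightarrow> (s = 4*n + 2*(cell n t div n) \<or> s = 6*n + 2*(cell n t mod n)) \<longleftrightarrow> cell n t div n = (s - 4*n) div 2"
    using k grid_mod_less by blast
  then show ?thesis unfolding code_edge_def using assms by auto
qed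

lemma code_edge_even_col:
  assumes "even s" "6*n \<le> s" "s < 8*n"
  shows "code_edge n s t \<longleftrightarrow> odd (t - 8*n) \<and> cell n t < n*n \<and> cell n t mod n = (s - 6*n) div 2"
proof -
  have k: "\<And>q r. q < n \<Longrightarrow> (s = 4*n + 2*q \<or> s = 6*n + 2*r) \<longleftrightarrow> r = (s - 6*n) div 2"
    using assms by presburger
  have "cell n t < n*n \<Longrightarrow> (s = 4*n + 2*(cell n t div n) \<or> s = 6*n + 2*(cell n t mod n)) \<longleftrightarrow> cell n t mod n = (s - 6*n) div 2"
    using k grid_div_less by blast
  moreover have "4*n \<le> s" using assms by simp
  ultimately show ?thesis unfolding code_edge_def using assms by auto
qed

lemma code_edge_odd_pad:
  assumes "odd s" "s < 4*n"
  shows "code_edge n s t \<longleftrightarrow> even (t - 8*n) \<and> cell n t < 3*n"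
  unfolding code_edge_def using assms by auto

lemma code_edge_even_pad:
  assumes "even s" "2 \<le> s" "s < 4*n"
  shows "code_edge n s t \<longleftrightarrow> odd (t - 8*n) \<and> cell n t < 7*n"
  unfolding code_edge_def using assms by auto

definition S_H_deg :: "nat \<Rightarrow> nat \<Rightarrow> nat" where
  "S_H_deg n s = (if s = 0 then 2 else if odd s then 4*n - s div 2 + (if s < 4*n then 3*n else n)
               else (s + 2) div 2 + (if s < 4*n then 7*n else n))"

lemma card_code_nbrs_even:
  assumes "\<And>t. code_edge n s t \<longleftrightarrow> even (t - 8*n) \<and> P (cell n t)"
  shows "card (code_nbrs n s) = card {j. j \<le> n*n \<and> P j}"
  using card_T_even[of n P] assms by simp

lemma card_code_nbrs_odd:
  assumes "\<And>t. code_edge n s t \<longleftrightarrow> odd (t - 8*n) \<and> P (cell n t)"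
  shows "card (code_nbrs n s) = card {j. j < n*n \<and> P j}"
  using card_T_odd[of n P] assms by simp

lemma card_code_nbrs_of_odd:
  assumes "7 \<le> n" "odd s" "s < 8*n"
  shows "card (code_nbrs n s) = (if s < 4*n then 3*n else n)"
proof -
  have "7*n \<le> n*n"
    using assms(1) by simp
  have "s < 4*n \<or> (4*n < s \<and> s < 6*n) \<or> 6*n < s"
    using \<open>odd s\<close> by presburger
  then consider "s < 4*n" | "4*n < s" "s < 6*n" | "6*n < s"
    by blast
  then show ?thesis
  proof cases
    case 1
    have "card (code_nbrs n s) = card {j. j \<le> n*n \<and> j < 3*n}"
      using code_edge_odd_pad[OF \<open>odd s\<close> 1] by (intro card_code_nbrs_even) auto
    also have "{j. j \<le> n*n \<and> j < 3*n} = {..<3*n}"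
      using \<open>7*n \<le> n*n\<close> by (auto, linarith)
    finally show ?thesis
      using 1 by simp
  next
    case 2
    have "card (code_nbrs n s) = card {j. j \<le> n*n \<and> (j < n*n \<and> j div n = (s - 4*n - 1) div 2)}"
      using code_edge_odd_row[OF \<open>odd s\<close> 2] by (intro card_code_nbrs_even) auto
    also have "\<dots> = card {j. j < n*n \<and> j div n = (s - 4*n - 1) div 2}"
      by (rule arg_cong[where f = card]) auto
    also have "\<dots> = n"
      using 2 \<open>odd s\<close> by (intro card_grid_row) presburger
    finally show ?thesis
      using 2 by simp
  next
    case 3
    have "card (code_nbrs n s) = card {j. j \<le> n*n \<and> (j < n*n \<and> j mod n = (8*n - 1 - s) div 2)}"
      using code_edge_odd_col[OF \<open>odd s\<close> 3 \<open>s < 8*n\<close>] by (intro card_code_nbrs_even) auto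
    also have "\<dots> = card {j. j < n*n \<and> j mod n = (8*n - 1 - s) div 2}"
      by (rule arg_cong[where f = card]) auto
    also have "\<dots> = n"
      using 3 \<open>odd s\<close> \<open>s < 8*n\<close> by (intro card_grid_col) presburger
    finally show ?thesis
      using 3 by simp
  qed
qed

lemma card_code_nbrs_of_even:
  assumes "7 \<le> n" "even s" "2 \<le> s" "s < 8*n"
  shows "card (code_nbrs n s) = (if s < 4*n then 7*n else n)"
proof -
  have "7*n \<le> n*n"
    using assms(1) by simp
  consider "s < 4*n" | "4*n \<le> s" "s < 6*n" | "6*n \<le> s"
    by linarith
  then show ?thesis
  proof cases
    case 1
    have "card (code_nbrs n s) = card {j. j < n*n \<and> j < 7*n}"
      using code_edge_even_pad[OF \<open>even s\<close> \<open>2 \<le> s\<close> 1] by (intro card_code_nbrs_odd) auto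
    also have "{j. j < n*n \<and> j < 7*n} = {..<7*n}"
      using \<open>7*n \<le> n*n\<close> by (auto, linarith)
    finally show ?thesis
      using 1 by simp
  next
    case 2
    have "card (code_nbrs n s) = card {j. j < n*n \<and> (j < n*n \<and> j div n = (s - 4*n) div 2)}"
      using code_edge_even_row[OF \<open>even s\<close> 2] by (intro card_code_nbrs_odd) auto
    also have "\<dots> = card {j. j < n*n \<and> j div n = (s - 4*n) div 2}"
      by (rule arg_cong[where f = card]) auto
    also have "\<dots> = n"
      using 2 \<open>even s\<close> by (intro card_grid_row) presburger
    finally show ?thesis
      using 2 by simp
  next
    case 3
    have "card (code_nbrs n s) = card {j. j < n*n \<and> (j < n*n \<and> j mod n = (s - 6*n) div 2)}"
      using code_edge_even_col[OF \<open>even s\<close> 3 \<open>s < 8*n\<close>] by (intro card_code_nbrs_odd) auto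
    also have "\<dots> = card {j. j < n*n \<and> j mod n = (s - 6*n) div 2}"
      by (rule arg_cong[where f = card]) auto
    also have "\<dots> = n"
      using 3 \<open>even s\<close> \<open>s < 8*n\<close> by (intro card_grid_col) presburger
    finally show ?thesis
      using 3 by simp
  qed
qed

lemma H_deg_S:
  assumes "7 \<le> n" "s < 8*n"
  shows "H_deg n s = S_H_deg n s"
proof -
  have H_deg_eq: "H_deg n s = card (half_graph_nbrs n s) + card (code_nbrs n s) + (if s = 0 then 1 else 0)"
    using H_deg_S_split assms by simp
  have "s = 0 \<or> odd s \<or> (even s \<and> 2 \<le> s)"
    by presburger
  then consider "s = 0" | "odd s" | "even s" "2 \<le> s"
    by blast
  then show ?thesis
  proof cases
    case 1
    then have "card (half_graph_nbrs n s) = 1" "code_nbrs n s = {}"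
      using card_half_graph_nbrs_even[of s n] no_code_edge_0[of n] assms by auto
    then show ?thesis
      using H_deg_eq 1 by (simp add: S_H_deg_def)
  next
    case 2
    then show ?thesis
      using H_deg_eq card_half_graph_nbrs_odd[OF 2 assms(2)] card_code_nbrs_of_odd[OF assms(1) 2 assms(2)]
        odd_pos[OF 2] by (simp add: S_H_deg_def)
  next
    case 3
    then show ?thesis
      using H_deg_eq card_half_graph_nbrs_even[OF 3(1) assms(2)] card_code_nbrs_of_even[OF assms(1) 3 assms(2)]
      by (simp add: S_H_deg_def)
  qed
qed

lemma S_H_deg_cases:
  assumes "1 \<le> n" "s < 8*n"
  shows
 "(s = 0 \<and> S_H_deg n s = 2)
  \<or> (odd s \<and> s < 4*n \<and> S_H_deg n s = 7*n - s div 2 \<and> 5*n < S_H_deg n s \<and> S_H_deg n s \<le> 7*n)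
  \<or> (odd s \<and> 4*n < s \<and> S_H_deg n s = 5*n - s div 2 \<and> n < S_H_deg n s \<and> S_H_deg n s \<le> 3*n)
  \<or> (even s \<and> 2 \<le> s \<and> s < 4*n \<and> S_H_deg n s = s div 2 + 1 + 7*n \<and> 7*n + 1 < S_H_deg n s \<and> S_H_deg n s \<le> 9*n)
  \<or> (even s \<and> 4*n \<le> s \<and> S_H_deg n s = s div 2 + 1 + n \<and> 3*n < S_H_deg n s \<and> S_H_deg n s \<le> 5*n)"
proof -
  have "s = 0 \<or> (odd s \<and> s < 4*n) \<or> (odd s \<and> 4*n < s) \<or> (even s \<and> 2 \<le> s \<and> s < 4*n) \<or> (even s \<and> 4*n \<le> s)"
    by presburger
  then consider "s = 0" | "odd s" "s < 4*n" | "odd s" "4*n < s" | "even s" "2 \<le> s" "s < 4*n" | "even s" "4*n \<le> s"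
    by blast
  then show ?thesis
  proof cases
    case 1 then show ?thesis unfolding S_H_deg_def by simp
  next
    case 2
    then have d: "S_H_deg n s = 4*n - s div 2 + 3*n" unfolding S_H_deg_def by auto
    have "s div 2 < 2*n" using 2 by presburger
    then have "S_H_deg n s = 7*n - s div 2 \<and> 5*n < S_H_deg n s \<and> S_H_deg n s \<le> 7*n"
      using d by linarith
    then show ?thesis using 2 by blast
  next
    case 3
    then have d: "S_H_deg n s = 4*n - s div 2 + n" unfolding S_H_deg_def by auto
    have "2*n \<le> s div 2" "s div 2 < 4*n" using 3 assms by presburger+
    then have "S_H_deg n s = 5*n - s div 2 \<and> n < S_H_deg n s \<and> S_H_deg n s \<le> 3*n"
      using d by linarith
    then show ?thesis using 3 by blast
  next
    case 4
    then have d: "S_H_deg n s = (s + 2) div 2 + 7*n" unfolding S_H_deg_def by auto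
    have "(s + 2) div 2 = s div 2 + 1" "1 \<le> s div 2" "s div 2 < 2*n" using 4 by presburger+
    then have "S_H_deg n s = s div 2 + 1 + 7*n \<and> 7*n + 1 < S_H_deg n s \<and> S_H_deg n s \<le> 9*n"
      using d by linarith
    then show ?thesis using 4 by blast
  next
    case 5
    then have d: "S_H_deg n s = (s + 2) div 2 + n" unfolding S_H_deg_def using assms by auto
    have "(s + 2) div 2 = s div 2 + 1" "2*n \<le> s div 2" "s div 2 < 4*n"
      using 5 assms by presburger+
    then have "S_H_deg n s = s div 2 + 1 + n \<and> 3*n < S_H_deg n s \<and> S_H_deg n s \<le> 5*n"
      using d by linarith
    then show ?thesis using 5 by blast
  qed
qed

lemma S_H_deg_le:
  assumes "1 \<le> n" "s < 8*n"
  shows "S_H_deg n s \<le> 9*n"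
  using S_H_deg_cases[OF assms] assms(1) by auto

definition S_H_deg_inv :: "nat \<Rightarrow> nat \<Rightarrow> nat" where
  "S_H_deg_inv n d = (if d = 2 then 0 else if d \<le> 3*n then 2*(5*n - d) + 1 else if d \<le> 5*n then 2*(d - 1 - n)
     else if d \<le> 7*n then 2*(7*n - d) + 1 else 2*(d - 1 - 7*n))"

lemma S_H_deg_inverse:
  assumes "2 \<le> n" "s < 8*n"
  shows "S_H_deg_inv n (S_H_deg n s) = s"
proof -
  have n1: "1 \<le> n" using assms by simp
  from S_H_deg_cases[OF n1 assms(2)] show ?thesis
  proof (elim disjE conjE)
    assume "s = 0" "S_H_deg n s = 2" then show ?thesis unfolding S_H_deg_inv_def by simp
  next
    assume a: "odd s" "s < 4*n" "S_H_deg n s = 7*n - s div 2" "5*n < S_H_deg n s" "S_H_deg n s \<le> 7*n"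
    have "s = 2*(s div 2) + 1" using a(1) by presburger
    then show ?thesis using a assms unfolding S_H_deg_inv_def by (simp (no_asm_simp); linarith?)
  next
    assume a: "odd s" "4*n < s" "S_H_deg n s = 5*n - s div 2" "n < S_H_deg n s" "S_H_deg n s \<le> 3*n"
    have "s = 2*(s div 2) + 1" using a(1) by presburger
    then show ?thesis using a assms unfolding S_H_deg_inv_def by (simp (no_asm_simp); linarith?)
  next
    assume a: "even s" "2 \<le> s" "s < 4*n" "S_H_deg n s = s div 2 + 1 + 7*n" "7*n + 1 < S_H_deg n s" "S_H_deg n s \<le> 9*n"
    have "s = 2*(s div 2)" using a(1) by presburger
    then show ?thesis using a assms unfolding S_H_deg_inv_def by (simp (no_asm_simp); linarith?)
  next
    assume a: "even s" "4*n \<le> s" "S_H_deg n s = s div 2 + 1 + n" "3*n < S_H_deg n s" "S_H_deg n s \<le> 5*n"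
    have "s = 2*(s div 2)" using a(1) by presburger
    then show ?thesis using a assms unfolding S_H_deg_inv_def by (simp (no_asm_simp); linarith?)
  qed
qed

lemma S_H_deg_inj:
  assumes "2 \<le> n" "s1 < 8*n" "s2 < 8*n" "S_H_deg n s1 = S_H_deg n s2"
  shows "s1 = s2"
  using S_H_deg_inverse[OF assms(1,2)] S_H_deg_inverse[OF assms(1,3)] assms(4) by metis

lemma H_edge_band_up:
  assumes "8*n \<le> t" "k < band n" "t + 2*k + 1 < nverts n"
  shows "H_edge n t (t + 2*k + 1)"
  unfolding H_edge_def H_arc_def using assms by auto

lemma H_edge_band_down:
  assumes "8*n + 2*k + 1 \<le> t" "k < band n" "t < nverts n"
  shows "H_edge n t (t - (2*k + 1))"
proof -
  have "H_arc n (t - (2*k + 1)) t" unfolding H_arc_def using assms by auto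
  then show ?thesis unfolding H_edge_def using assms by auto
qed

lemma band_le_H_deg_T:
  assumes n: "19 \<le> n" and t: "8*n \<le> t" "t < nverts n"
  shows "band n \<le> H_deg n t"
proof -
  have big: "4 * band n \<le> nverts n - 8*n" unfolding band_def nverts_def
  proof -
    have "36*n + 4 \<le> 2*n*n + 1" using n
    proof -
      have "36*n + 4 \<le> 2*19*n" using n by simp
      also have "\<dots> \<le> 2*n*n" using n by simp
      finally show ?thesis by simp
    qed
    then show "4 * (9 * n + 1) \<le> 2 * n * n + 8 * n + 1 - 8 * n" by simp
  qed
  show ?thesis
  proof (cases "t + 2 * band n < nverts n")
    case True
    have sub: "(\<lambda>k. t + 2*k + 1) ` {..<band n} \<subseteq> H_nbrs n t"
      using True t H_edge_band_up[of n t] by auto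
    have "band n = card ((\<lambda>k. t + 2*k + 1) ` {..<band n})"
      by (simp add: card_image inj_on_def)
    also have "\<dots> \<le> H_deg n t" unfolding H_deg_def by (rule card_mono[OF _ sub]) simp
    finally show ?thesis .
  next
    case False
    then have tl: "8*n + 2 * band n \<le> t" using big t by linarith
    have sub: "(\<lambda>k. t - (2*k + 1)) ` {..<band n} \<subseteq> H_nbrs n t"
    proof
      fix v assume "v \<in> (\<lambda>k. t - (2*k + 1)) ` {..<band n}"
      then obtain k where k: "k < band n" "v = t - (2*k+1)" by auto
      have "8*n + 2*k + 1 \<le> t" using k tl by linarith
      then show "v \<in> H_nbrs n t"
        using H_edge_band_down[of n k t] k t by auto
    qed
    have inj: "inj_on (\<lambda>k. t - (2*k + 1)) {..<band n}"
      using tl by (auto simp: inj_on_def)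
    have "band n = card ((\<lambda>k. t - (2*k + 1)) ` {..<band n})"
      using inj by (simp add: card_image)
    also have "\<dots> \<le> H_deg n t" unfolding H_deg_def by (rule card_mono[OF _ sub]) simp
    finally show ?thesis .
  qed
qed

lemma H_edge_T_close:
  assumes "1 \<le> n" "8*n \<le> u" "H_edge n u v"
  shows "v < 8*n \<or> (u < v + 2 * band n \<and> v < u + 2 * band n)"
proof -
  have "H_arc n u v \<or> H_arc n v u" using assms(3) unfolding H_edge_def by simp
  then show ?thesis
  proof
    assume "H_arc n u v"
    then have "u < v \<and> v - u < 2 * band n" using assms(1,2) unfolding H_arc_def by auto
    then show ?thesis by arith
  next
    assume h: "H_arc n v u"
    show ?thesis
    proof (cases "v < 8*n")
      case True then show ?thesis by simp
    next
      case False
      then have "v < u \<and> u - v < 2 * band n" using h assms(1,2) unfolding H_arc_def by auto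
      then show ?thesis by arith
    qed
  qed
qed

lemma H_deg_le:
  assumes n: "7 \<le> n" and u: "u < nverts n"
  shows "H_deg n u \<le> 50*n"
proof (cases "u < 8*n")
  case True
  then show ?thesis using H_deg_S[OF n True] S_H_deg_le[of n u] n by simp
next
  case False
  have sub: "H_nbrs n u \<subseteq> {..<8*n} \<union> {u + 1 - 2 * band n ..< u + 2 * band n}"
    using H_edge_T_close[of n u] False n by force
  have "H_deg n u \<le> card ({..<8*n} \<union> {u + 1 - 2 * band n ..< u + 2 * band n})"
    unfolding H_deg_def by (rule card_mono[OF _ sub]) simp
  also have "\<dots> \<le> card {..<8*n} + card {u + 1 - 2 * band n ..< u + 2 * band n}"
    by (rule card_Un_le)
  also have "\<dots> \<le> 8*n + 4 * band n" by simp
  also have "\<dots> \<le> 50*n" unfolding band_def using n by simp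
  finally show ?thesis .
qed

lemma H_deg_a:
  assumes n: "19 \<le> n"
  shows "2 * band n \<le> H_deg n (8*n + 2 * band n)"
proof -
  let ?a = "8*n + 2 * band n"
  have big: "8*n + 4 * band n < nverts n" unfolding band_def nverts_def
  proof -
    have "36*n + 4 < 2*n*n + 1"
    proof -
      have "36*n + 4 < 2*19*n" using n by simp
      also have "\<dots> \<le> 2*n*n" using n by simp
      finally show ?thesis by simp
    qed
    then show "8 * n + 4 * (9 * n + 1) < 2 * n * n + 8 * n + 1" by simp
  qed
  let ?R = "(\<lambda>k. ?a + 2*k + 1) ` {..<band n}"
  let ?L = "(\<lambda>k. ?a - (2*k + 1)) ` {..<band n}"
  have sR: "?R \<subseteq> H_nbrs n ?a"
    using big H_edge_band_up[of n ?a] by auto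
  have sL: "?L \<subseteq> H_nbrs n ?a"
  proof
    fix v assume "v \<in> ?L"
    then obtain k where k: "k < band n" "v = ?a - (2*k+1)" by auto
    then show "v \<in> H_nbrs n ?a"
      using H_edge_band_down[of n k ?a] big by auto
  qed
  have cR: "card ?R = band n" by (simp add: card_image inj_on_def)
  have cL: "card ?L = band n" by (subst card_image) (auto simp: inj_on_def)
  have d: "?R \<inter> ?L = {}" by auto
  have "2 * band n = card (?R \<union> ?L)" using cR cL d by (subst card_Un_disjoint) auto
  also have "\<dots> \<le> H_deg n ?a" unfolding H_deg_def by (rule card_mono) (use sR sL in auto)
  finally show ?thesis .
qed

lemma H_nbrs_b:
  assumes n: "1 \<le> n" and v: "v < nverts n" "H_edge n (8*n) v"
  shows "v \<in> (\<lambda>k. 8*n + 2*k + 1) ` {..<band n} \<union> {4*n+1, 8*n - 1} \<union> {s. s < 4*n \<and> odd s}"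
proof (cases "8*n \<le> v")
  case True
  have "H_arc n (8*n) v" using v True unfolding H_edge_def H_arc_def by auto
  then have "8*n < v" "odd (v - 8*n)" "v - 8*n < 2 * band n"
    using True n unfolding H_arc_def nverts_def by auto
  then obtain k where "v - 8*n = 2*k + 1" by (metis oddE)
  then have "v = 8*n + 2*k + 1" "k < band n"
    using \<open>8*n < v\<close> \<open>v - 8*n < 2 * band n\<close> by auto
  then show ?thesis by auto
next
  case False
  then have "code_edge n v (8*n)"
    using H_edge_S_T[of v n "8*n"] v H_edge_sym nverts_bounds[of n] n by (auto simp: nverts_def)
  then have "(odd v \<and> (v = 4*n + 1 \<or> v = 8*n - 1)) \<or> (odd v \<and> v < 4*n)"
    unfolding code_edge_def cell_def using n by auto
  then show ?thesis by auto
qed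

lemma H_deg_b:
  assumes n: "1 \<le> n"
  shows "H_deg n (8*n) \<le> band n + 2 + 2*n"
proof -
  let ?X = "(\<lambda>k. 8*n + 2*k + 1) ` {..<band n}"
  let ?Y = "{4*n+1, 8*n - 1}"
  let ?Z = "{s. s < 4*n \<and> odd s}"
  have "H_deg n (8*n) \<le> card (?X \<union> ?Y \<union> ?Z)"
    unfolding H_deg_def by (rule card_mono) (use H_nbrs_b[OF n] in auto)
  moreover have "card (?X \<union> ?Y \<union> ?Z) \<le> card (?X \<union> ?Y) + card ?Z"
    by (rule card_Un_le)
  moreover have "card (?X \<union> ?Y) \<le> card ?X + card ?Y" by (rule card_Un_le)
  moreover have "card ?X \<le> band n" using card_image_le[of "{..<band n}"] by simp
  moreover have "card ?Y \<le> 2" by (simp add: card_insert_le_m1)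
  moreover have "card ?Z = 2*n" using card_odd_less[of "4*n"] by simp
  ultimately show ?thesis by linarith
qed

lemma cell_less:
  assumes "8*n \<le> t" "t < nverts n - 1"
  shows "cell n t < n*n"
proof -
  obtain m where m: "m = n*n" by simp
  have "t - 8*n < 2*m" using assms m unfolding nverts_def by auto
  then show ?thesis unfolding cell_def m[symmetric] by simp
qed

lemma T_vertex_eqI:
  assumes "8*n \<le> u" "8*n \<le> v" "even (u - 8*n) \<longleftrightarrow> even (v - 8*n)" "cell n u = cell n v"
  shows "u = v"
proof -
  have "u - 8*n = v - 8*n" using assms(3,4) unfolding cell_def by presburger
  then show ?thesis using assms(1,2) by simp
qed

definition S_code :: "nat \<Rightarrow> nat \<Rightarrow> nat set" where
  "S_code n t = {s. s < 8*n \<and> H_edge n t s}"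

lemma H_edge_T_S_iff:
  assumes "8*n \<le> t" "t < nverts n" "s < 8*n"
  shows "H_edge n t s \<longleftrightarrow> code_edge n s t \<or> (s = 0 \<and> t = nverts n - 1)"
  using H_edge_S_T[OF assms(3,1,2)] H_edge_sym by blast

lemma T_vertex_eq_if_code_subset_even:
  assumes u: "8*n \<le> u" "even (u - 8*n)" "cell n u < n*n" and "8*n \<le> v"
    and subset: "\<And>s. s < 8*n \<Longrightarrow> code_edge n s u \<Longrightarrow> code_edge n s v"
  shows "u = v"
proof -
  have q: "cell n u div n < n" "cell n u mod n < n"
    using grid_div_less[OF u(3)] grid_mod_less[OF u(3)] by auto
  define rs where "rs = 4*n + 1 + 2*(cell n u div n)"
  define r where "r = cell n u mod n"
  define cs where "cs = 8*n - 1 - 2*r"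
  have rs: "odd rs" "4*n < rs" "rs < 6*n"
    unfolding rs_def using q by auto
  have "r < n"
    using q by (simp add: r_def)
  then have "cs = 2*(4*n - 1 - r) + 1" "8*n - 1 - cs = 2*r"
    unfolding cs_def by arith+
  then have cs: "odd cs" "6*n < cs" "cs < 8*n" and cs_inv: "(8*n - 1 - cs) div 2 = cell n u mod n"
    using \<open>r < n\<close> unfolding r_def by simp_all
  have "code_edge n rs u"
    unfolding code_edge_odd_row[OF rs] using u by (simp add: rs_def)
  then have "code_edge n rs v"
    using subset rs by simp
  then have "even (v - 8*n)" "cell n v div n = cell n u div n"
    unfolding code_edge_odd_row[OF rs] by (auto simp: rs_def)
  moreover have "code_edge n cs u"
    unfolding code_edge_odd_col[OF cs] cs_inv using u by simp
  then have "code_edge n cs v"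
    using subset cs by simp
  then have "cell n v mod n = cell n u mod n"
    unfolding code_edge_odd_col[OF cs] cs_inv by simp
  ultimately have "cell n u = cell n v"
    using div_mult_mod_eq[of "cell n u" n] div_mult_mod_eq[of "cell n v" n] by simp
  with u(2) \<open>even (v - 8*n)\<close> show ?thesis
    by (intro T_vertex_eqI[OF u(1) \<open>8*n \<le> v\<close>]) simp_all
qed

lemma T_vertex_eq_if_code_subset_odd:
  assumes u: "8*n \<le> u" "odd (u - 8*n)" "cell n u < n*n" and "8*n \<le> v"
    and subset: "\<And>s. s < 8*n \<Longrightarrow> code_edge n s u \<Longrightarrow> code_edge n s v"
  shows "u = v"
proof -
  have q: "cell n u div n < n" "cell n u mod n < n"
    using grid_div_less[OF u(3)] grid_mod_less[OF u(3)] by auto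
  define rs where "rs = 4*n + 2*(cell n u div n)"
  define cs where "cs = 6*n + 2*(cell n u mod n)"
  have rs: "even rs" "4*n \<le> rs" "rs < 6*n"
    unfolding rs_def using q by auto
  have cs: "even cs" "6*n \<le> cs" "cs < 8*n"
    unfolding cs_def using q by auto
  have "code_edge n rs u"
    unfolding code_edge_even_row[OF rs] using u by (simp add: rs_def)
  then have "code_edge n rs v"
    using subset rs by simp
  then have "odd (v - 8*n)" "cell n v div n = cell n u div n"
    unfolding code_edge_even_row[OF rs] by (auto simp: rs_def)
  moreover have "code_edge n cs u"
    unfolding code_edge_even_col[OF cs] using u by (simp add: cs_def)
  then have "code_edge n cs v"
    using subset cs by simp
  then have "cell n v mod n = cell n u mod n"
    unfolding code_edge_even_col[OF cs] by (auto simp: cs_def)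
  ultimately have "cell n u = cell n v"
    using div_mult_mod_eq[of "cell n u" n] div_mult_mod_eq[of "cell n v" n] by simp
  with u(2) \<open>odd (v - 8*n)\<close> show ?thesis
    by (intro T_vertex_eqI[OF u(1) \<open>8*n \<le> v\<close>]) simp_all
qed

lemma S_code_inj:
  assumes "1 \<le> n" and u: "8*n \<le> u" "u < nverts n" and v: "8*n \<le> v" "v < nverts n" and "u \<noteq> v"
  shows "S_code n u \<noteq> S_code n v"
proof
  assume eq: "S_code n u = S_code n v"
  have zero_in_code: "0 \<in> S_code n t \<longleftrightarrow> t = nverts n - 1" if "8*n \<le> t" "t < nverts n" for t
    unfolding S_code_def using H_edge_T_S_iff[OF that, of 0] no_code_edge_0[OF \<open>1 \<le> n\<close>] \<open>1 \<le> n\<close> by auto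
  have "u \<noteq> nverts n - 1" "v \<noteq> nverts n - 1"
    using zero_in_code[OF u] zero_in_code[OF v] eq \<open>u \<noteq> v\<close> by auto
  then have "cell n u < n*n"
    using cell_less[OF u(1)] u(2) by simp
  have subset: "code_edge n s v" if "s < 8*n" "code_edge n s u" for s
  proof -
    have "H_edge n u s"
      using H_edge_T_S_iff[OF u that(1)] that(2) by simp
    then have "H_edge n v s"
      using eq that(1) unfolding S_code_def by blast
    then show ?thesis
      using H_edge_T_S_iff[OF v that(1)] \<open>v \<noteq> nverts n - 1\<close> by simp
  qed
  show False
  proof (cases "even (u - 8*n)")
    case True
    then show False
      using T_vertex_eq_if_code_subset_even[OF u(1) True \<open>cell n u < n*n\<close> v(1) subset] \<open>u \<noteq> v\<close> by simp
  next
    case False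
    then show False
      using T_vertex_eq_if_code_subset_odd[OF u(1) _ \<open>cell n u < n*n\<close> v(1) subset] \<open>u \<noteq> v\<close> by simp
  qed
qed

lemma H_nbrs_subset:
  assumes "1 \<le> n"
  shows "H_nbrs n u \<subseteq> {..<nverts n} - {u}"
  using H_edge_irrefl[OF assms] by auto

lemma nbhd_G: "nbhd {..<nverts n} (G_edge n) u = (if u < nverts n then {..<nverts n} - {u} - H_nbrs n u else {})"
  unfolding nbhd_def G_edge_def by auto

lemma deg_G:
  assumes "1 \<le> n" "u < nverts n"
  shows "deg {..<nverts n} (G_edge n) u = nverts n - 1 - H_deg n u"
proof -
  have "deg {..<nverts n} (G_edge n) u = card ({..<nverts n} - {u} - H_nbrs n u)"
    unfolding deg_def nbhd_G using assms by simp
  also have "\<dots> = card ({..<nverts n} - {u}) - card (H_nbrs n u)"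
    using H_nbrs_subset[OF assms(1), of u] by (intro card_Diff_subset) auto
  also have "\<dots> = nverts n - 1 - H_deg n u" unfolding H_deg_def using assms by simp
  finally show ?thesis .
qed

lemma H_deg_less:
  assumes "1 \<le> n" "u < nverts n"
  shows "H_deg n u \<le> nverts n - 1"
proof -
  have "H_deg n u \<le> card ({..<nverts n} - {u})"
    unfolding H_deg_def by (rule card_mono) (use H_nbrs_subset[OF assms(1)] in auto)
  then show ?thesis using assms by simp
qed

lemma no_H_edge_even:
  assumes "even x" "even y" "x \<noteq> 0" "y \<noteq> 0"
  shows "\<not> H_edge n x y"
  using H_edge_odd_sum[of n x y] assms by (auto simp: doubleton_eq_iff)

text \<open>The even vertices strictly between \<open>0\<close> and \<open>nverts n - 1\<close> form a clique of \<open>G\<close> of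
  size about \<open>n\<^sup>2\<close>, while \<open>H\<close>-neighbourhoods have size \<open>O(n)\<close>.\<close>
lemma G_common_triangle:
  assumes n: "100 \<le> n" and u: "u < nverts n" and v: "v < nverts n"
  shows "\<exists>x y z. x \<in> nbhd {..<nverts n} (G_edge n) u \<inter> nbhd {..<nverts n} (G_edge n) v
              \<and> y \<in> nbhd {..<nverts n} (G_edge n) u \<inter> nbhd {..<nverts n} (G_edge n) v
              \<and> z \<in> nbhd {..<nverts n} (G_edge n) u \<inter> nbhd {..<nverts n} (G_edge n) v
              \<and> G_edge n x y \<and> G_edge n x z \<and> G_edge n y z"
proof -
  let ?C = "{x. 2 \<le> x \<and> x < nverts n - 1 \<and> even x}"
  let ?B = "H_nbrs n u \<union> H_nbrs n v \<union> {u, v}"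
  have "card ?C = n*n + 4*n - 1"
  proof -
    have "?C = {x. x < nverts n - 1 \<and> even x} - {x. x < 2 \<and> even x}"
      by auto
    moreover have "card {x. x < nverts n - 1 \<and> even x} = n*n + 4*n"
      using card_even_less[of "nverts n - 1"] unfolding nverts_def by simp
    moreover have "card {x::nat. x < 2 \<and> even x} = 1"
      using card_even_less[of 2] by simp
    moreover have "{x::nat. x < 2 \<and> even x} \<subseteq> {x. x < nverts n - 1 \<and> even x}"
      using n unfolding nverts_def by auto
    ultimately show ?thesis
      by (simp add: card_Diff_subset)
  qed
  moreover have "card ?B \<le> 100*n + 2"
  proof -
    have "card ?B \<le> card (H_nbrs n u \<union> H_nbrs n v) + card {u, v}"
      by (rule card_Un_le)
    moreover have "card (H_nbrs n u \<union> H_nbrs n v) \<le> H_deg n u + H_deg n v"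
      unfolding H_deg_def by (rule card_Un_le)
    moreover have "H_deg n u \<le> 50*n" "H_deg n v \<le> 50*n"
      using H_deg_le n u v by auto
    moreover have "card {u, v} \<le> 2"
      by (simp add: card_insert_le_m1)
    ultimately show ?thesis
      by linarith
  qed
  moreover have "100 * n \<le> n*n"
    using n by simp
  ultimately have "3 \<le> card ?C - card ?B"
    using n by linarith
  also have "card ?C - card ?B \<le> card (?C - ?B)"
    by (rule diff_card_le_card_Diff) auto
  finally obtain x y z where xyz: "x \<in> ?C - ?B" "y \<in> ?C - ?B" "z \<in> ?C - ?B" "x \<noteq> y" "x \<noteq> z" "y \<noteq> z"
    by (rule obtain_three_distinct)
  have common: "w \<in> nbhd {..<nverts n} (G_edge n) u \<inter> nbhd {..<nverts n} (G_edge n) v"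
    if "w \<in> ?C - ?B" for w
    using that u v H_edge_sym unfolding nbhd_def G_edge_def by auto
  have clique: "G_edge n w w'" if "w \<in> ?C - ?B" "w' \<in> ?C - ?B" "w \<noteq> w'" for w w'
    using that no_H_edge_even[of w w' n] unfolding G_edge_def by auto
  show ?thesis
    using common[OF xyz(1)] common[OF xyz(2)] common[OF xyz(3)]
      clique[OF xyz(1,2,4)] clique[OF xyz(1,3,5)] clique[OF xyz(2,3,6)] by blast
qed

lemma simple_graph_G: "simple_graph {..<nverts n} (G_edge n)"
  unfolding simple_graph_def G_edge_def using H_edge_sym by auto

lemma G_independence_le_2:
  assumes "3 \<le> n" "I \<subseteq> {..<nverts n}" "\<forall>x\<in>I. \<forall>y\<in>I. \<not> G_edge n x y"
  shows "card I \<le> 2"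
proof (rule ccontr)
  assume "\<not> card I \<le> 2"
  then have "3 \<le> card I"
    by simp
  then obtain x y z where "x \<in> I" "y \<in> I" "z \<in> I" "x \<noteq> y" "x \<noteq> z" "y \<noteq> z"
    by (rule obtain_three_distinct)
  then have "H_edge n x y" "H_edge n x z" "H_edge n y z"
    using assms(2,3) unfolding G_edge_def by blast+
  then show False
    using H_triangle_free[OF assms(1)] by blast
qed

lemma a_less_nverts:
  assumes "19 \<le> n"
  shows "8*n + 2 * band n < nverts n"
proof -
  have "18*n + 2 < 2*19*n"
    using assms by simp
  also have "\<dots> \<le> 2*n*n"
    using assms by simp
  finally show ?thesis
    unfolding band_def nverts_def by simp
qed

lemma G_edge_a_b:
  assumes "19 \<le> n"
  shows "G_edge n (8*n + 2 * band n) (8*n)"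
  using no_H_edge_even[of "8*n + 2 * band n" "8*n" n] a_less_nverts[OF assms] nverts_bounds[of n] assms
  unfolding G_edge_def by (auto simp: band_def)

lemma deg_G_a_less_b:
  assumes "19 \<le> n"
  shows "deg {..<nverts n} (G_edge n) (8*n + 2 * band n) < deg {..<nverts n} (G_edge n) (8*n)"
proof -
  have "H_deg n (8*n) < H_deg n (8*n + 2 * band n)"
    using H_deg_a[OF assms] H_deg_b[of n] assms unfolding band_def by simp
  moreover have "H_deg n (8*n + 2 * band n) \<le> nverts n - 1"
    using H_deg_less[of n] a_less_nverts[OF assms] assms by simp
  ultimately show ?thesis
    using deg_G[of n] a_less_nverts[OF assms] nverts_bounds[of n] assms by simp
qed

lemma deg_G_S_greater:
  assumes "19 \<le> n" "u < 8*n" "8*n \<le> v" "v < nverts n"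
  shows "deg {..<nverts n} (G_edge n) v < deg {..<nverts n} (G_edge n) u"
proof -
  have "H_deg n u \<le> 9*n"
    using H_deg_S[of n u] S_H_deg_le[of n u] assms by simp
  moreover have "band n \<le> H_deg n v"
    using band_le_H_deg_T assms by simp
  ultimately have "H_deg n u < H_deg n v"
    unfolding band_def by simp
  moreover have "u < nverts n"
    using assms nverts_bounds[of n] by simp
  ultimately show ?thesis
    using deg_G[of n] H_deg_less[of n v] assms by simp
qed

lemma deg_G_S_inj:
  assumes "7 \<le> n" "u < 8*n" "v < 8*n" "u \<noteq> v"
  shows "deg {..<nverts n} (G_edge n) u \<noteq> deg {..<nverts n} (G_edge n) v"
proof
  assume "deg {..<nverts n} (G_edge n) u = deg {..<nverts n} (G_edge n) v"
  moreover have "u < nverts n" "v < nverts n"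
    using assms nverts_bounds[of n] by auto
  moreover have "H_deg n u \<le> nverts n - 1" "H_deg n v \<le> nverts n - 1"
    using H_deg_less[of n] \<open>u < nverts n\<close> \<open>v < nverts n\<close> assms by simp_all
  ultimately have "H_deg n u = H_deg n v"
    using deg_G[of n] assms by simp
  then have "S_H_deg n u = S_H_deg n v"
    using H_deg_S assms by simp
  then show False
    using S_H_deg_inj[of n u v] assms by simp
qed

lemma G_trace_S_inj:
  assumes "1 \<le> n" "8*n \<le> u" "u < nverts n" "8*n \<le> v" "v < nverts n" "u \<noteq> v"
  shows "nbhd {..<nverts n} (G_edge n) u \<inter> {..<8*n} \<noteq> nbhd {..<nverts n} (G_edge n) v \<inter> {..<8*n}"
proof
  assume eq: "nbhd {..<nverts n} (G_edge n) u \<inter> {..<8*n} = nbhd {..<nverts n} (G_edge n) v \<inter> {..<8*n}"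
  have trace: "nbhd {..<nverts n} (G_edge n) w \<inter> {..<8*n} = {..<8*n} - S_code n w"
    if "8*n \<le> w" "w < nverts n" for w
    using that nverts_bounds[of n] unfolding nbhd_def G_edge_def S_code_def by auto
  have "S_code n u \<subseteq> {..<8*n}" "S_code n v \<subseteq> {..<8*n}"
    unfolding S_code_def by auto
  then have "S_code n u = S_code n v"
    using eq trace[of u] trace[of v] assms by blast
  then show False
    using S_code_inj assms by blast
qed

lemma rigid_G:
  assumes "19 \<le> n"
  shows "rigid {..<nverts n} (G_edge n)"
proof (rule rigid_if_inj_endomorphisms[OF simple_graph_G, where S = "{..<8*n}"])
  show "inj_on f {..<nverts n}" if "graph_hom {..<nverts n} (G_edge n) {..<nverts n} (G_edge n) f" for f
  proof (rule endomorphism_inj_if_independence_le_2[OF nverts_bounds(2) _ _ _ _ that])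
    show "\<not> G_edge n x x" for x
      by (simp add: G_edge_def)
    show "G_edge n y x" if "G_edge n x y" for x y
      using that H_edge_sym by (auto simp: G_edge_def)
    show "\<not> G_edge n x (Suc x mod nverts n)" if "x < nverts n" for x
      using H_edge_cycle[of n x] that assms by (simp add: G_edge_def)
    show "card I \<le> 2" if "I \<subseteq> {..<nverts n}" "\<forall>x\<in>I. \<forall>y\<in>I. \<not> G_edge n x y" for I
      using G_independence_le_2[of n I] that assms by simp
  qed
  show "{..<8*n} \<subseteq> {..<nverts n}"
    using nverts_bounds[of n] by auto
  show "deg {..<nverts n} (G_edge n) v < deg {..<nverts n} (G_edge n) u"
    if "u \<in> {..<8*n}" "v \<in> {..<nverts n} - {..<8*n}" for u v
    using deg_G_S_greater[of n u v] assms that by auto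
  show "deg {..<nverts n} (G_edge n) u \<noteq> deg {..<nverts n} (G_edge n) v"
    if "u \<in> {..<8*n}" "v \<in> {..<8*n}" "u \<noteq> v" for u v
    using deg_G_S_inj[of n u v] assms that by auto
  show "nbhd {..<nverts n} (G_edge n) u \<inter> {..<8*n} \<noteq> nbhd {..<nverts n} (G_edge n) v \<inter> {..<8*n}"
    if "u \<in> {..<nverts n} - {..<8*n}" "v \<in> {..<nverts n} - {..<8*n}" "u \<noteq> v" for u v
    using G_trace_S_inj[of n u v] assms that by auto
qed

lemma deg_G_window:
  assumes "7 \<le> n" "u < nverts n"
  shows "nverts n \<le> deg {..<nverts n} (G_edge n) u + 50 * n + 1"
    and "deg {..<nverts n} (G_edge n) u < nverts n"
proof -
  have "deg {..<nverts n} (G_edge n) u = nverts n - 1 - H_deg n u"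
    using deg_G assms by simp
  moreover have "H_deg n u \<le> 50 * n" "H_deg n u \<le> nverts n - 1"
    using H_deg_le[OF assms] H_deg_less[of n u] assms by simp_all
  ultimately show "nverts n \<le> deg {..<nverts n} (G_edge n) u + 50 * n + 1"
    and "deg {..<nverts n} (G_edge n) u < nverts n"
    using assms(2) by linarith+
qed

definition admissible_rooted_graph :: "nat set \<Rightarrow> (nat \<Rightarrow> nat \<Rightarrow> bool) \<Rightarrow> nat \<Rightarrow> nat \<Rightarrow> bool" where
  "admissible_rooted_graph V E a b \<longleftrightarrow>
     simple_graph V E \<and> E a b \<and> rigid V E
   \<and> (\<forall>u\<in>V. \<forall>v\<in>V. u \<noteq> v \<longrightarrow>
       (\<exists>x y z. x \<in> nbhd V E u \<inter> nbhd V E v \<and> y \<in> nbhd V E u \<inter> nbhd V E v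
              \<and> z \<in> nbhd V E u \<inter> nbhd V E v \<and> E x y \<and> E x z \<and> E y z))
   \<and> nbhd V E a - nbhd V E b \<noteq> {} \<and> nbhd V E b - nbhd V E a \<noteq> {}
   \<and> deg V E a < deg V E b
   \<and> (\<exists>S. S \<subseteq> V - {a, b}
       \<and> (\<forall>u\<in>S. \<forall>v\<in>V - S. deg V E u > deg V E v)
       \<and> (\<forall>u\<in>S. \<forall>v\<in>S. u \<noteq> v \<longrightarrow> deg V E u \<noteq> deg V E v)
       \<and> (\<forall>u\<in>V - S. \<forall>v\<in>V - S. u \<noteq> v \<longrightarrow> nbhd V E u \<inter> S \<noteq> nbhd V E v \<inter> S))"

lemma admissible_rooted_graph_G:
  assumes "100 \<le> n"
  shows "admissible_rooted_graph {..<nverts n} (G_edge n) (8*n + 2 * band n) (8*n)"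
proof -
  let ?V = "{..<nverts n}" and ?S = "{..<8*n}"
  have "?S \<subseteq> ?V - {8*n + 2 * band n, 8*n}"
    using nverts_bounds[of n] by auto
  moreover have "\<forall>u\<in>?S. \<forall>v\<in>?V - ?S. deg ?V (G_edge n) u > deg ?V (G_edge n) v"
    using deg_G_S_greater[of n] assms by auto
  moreover have "\<forall>u\<in>?S. \<forall>v\<in>?S. u \<noteq> v \<longrightarrow> deg ?V (G_edge n) u \<noteq> deg ?V (G_edge n) v"
    using deg_G_S_inj[of n] assms by auto
  moreover have "\<forall>u\<in>?V - ?S. \<forall>v\<in>?V - ?S. u \<noteq> v \<longrightarrow>
                   nbhd ?V (G_edge n) u \<inter> ?S \<noteq> nbhd ?V (G_edge n) v \<inter> ?S"
    using G_trace_S_inj[of n] assms by auto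
  moreover have "\<forall>u\<in>?V. \<forall>v\<in>?V. u \<noteq> v \<longrightarrow>
       (\<exists>x y z. x \<in> nbhd ?V (G_edge n) u \<inter> nbhd ?V (G_edge n) v
              \<and> y \<in> nbhd ?V (G_edge n) u \<inter> nbhd ?V (G_edge n) v
              \<and> z \<in> nbhd ?V (G_edge n) u \<inter> nbhd ?V (G_edge n) v
              \<and> G_edge n x y \<and> G_edge n x z \<and> G_edge n y z)"
    using G_common_triangle[OF assms] by blast
  ultimately show ?thesis
    unfolding admissible_rooted_graph_def
    using simple_graph_G G_edge_a_b rigid_G deg_G_a_less_b assms
      nbhd_diff_nonempty_if_edge[OF simple_graph_G G_edge_a_b]
    by (intro conjI exI[of _ ?S]) auto
qed

section \<open>Digits\<close>

definition digit_support :: "nat \<Rightarrow> nat \<Rightarrow> nat set" where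
  "digit_support b K = {t. K div b^t mod b \<noteq> 0}"

lemma digit_eq:
  fixes b K a c :: nat
  assumes "K = a + c * b^t" "a < b^t"
  shows "K div b^t mod b = c mod b"
proof -
  have "0 < b^t"
    using assms(2) by linarith
  then show ?thesis
    using assms by simp
qed

lemma power_split:
  fixes b :: nat
  assumes "t \<le> s"
  shows "b^s = b^(s - t) * b^t"
  using assms by (simp flip: power_add)

lemma digit_vanishes_below:
  fixes b c :: nat
  assumes "t < s"
  shows "(c * b^s) div b^t mod b = 0"
proof -
  have "b dvd c * b^(s - t)"
    using assms by (intro dvd_mult dvd_power) auto
  moreover have "c * b^s = 0 + (c * b^(s - t)) * b^t"
    using power_split[of t s b] assms by simp
  ultimately show ?thesis
    using digit_eq[of "c * b^s" 0 "c * b^(s - t)" b t] assms by (cases "b^t = 0") (auto simp: zero_power)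
qed

lemma less_power_if_less_base:
  fixes b c :: nat
  assumes "c < b" "s < t"
  shows "c * b^s < b^t"
proof -
  have "c * b^s < b * b^s"
    using assms by simp
  also have "\<dots> \<le> b^t"
    using assms power_increasing[of "Suc s" t b] by simp
  finally show ?thesis .
qed

lemma digit_support_single:
  fixes b c :: nat
  assumes "0 < c" "c < b"
  shows "digit_support b (c * b^s) = {s}"
proof -
  have "c * b^s div b^t mod b = (if t = s then c else 0)" for t
  proof (cases t s rule: linorder_cases)
    case less
    then show ?thesis
      using digit_vanishes_below[of t s c b] by simp
  next
    case greater
    then show ?thesis
      using less_power_if_less_base[OF assms(2) greater] by simp
  qed (use assms in simp)
  then show ?thesis
    unfolding digit_support_def using assms by auto
qed

lemma digit_support_two_less:
  fixes b p q :: nat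
  assumes "0 < p" "0 < q" "p + q < b" "i < j"
  shows "digit_support b (p * b^i + q * b^j) = {i, j}"
proof -
  let ?K = "p * b^i + q * b^j"
  have "?K div b^t mod b = (if t = i then p else if t = j then q else 0)" for t
  proof -
    consider "t < i" | "t = i" | "i < t" "t < j" | "t = j" | "j < t"
      by linarith
    then show ?thesis
    proof cases
      case 1
      have "?K div b^t mod b = (p * b^i div b^t + q * b^j div b^t) mod b"
        using power_split[of t i b] power_split[of t j b] 1 \<open>i < j\<close> by (simp add: algebra_simps)
      also have "\<dots> = 0"
        using digit_vanishes_below[of t i p b] digit_vanishes_below[of t j q b] 1 \<open>i < j\<close>
        by (simp add: mod_add_eq[symmetric])
      finally show ?thesis
        using 1 \<open>i < j\<close> by simp
    next
      case 2
      have "?K = 0 + (p + q * b^(j - i)) * b^t"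
        using power_split[of i j b] 2 \<open>i < j\<close> by (simp add: algebra_simps)
      moreover have "(p + q * b^(j - i)) mod b = p"
        using digit_vanishes_below[of 0 "j - i" q b] \<open>i < j\<close> assms by (simp add: mod_add_eq[symmetric])
      ultimately show ?thesis
        using 2 digit_eq[of ?K 0 "p + q * b^(j - i)" b t] assms by (cases "b^t = 0") auto
    next
      case 3
      have "?K = p * b^i + (q * b^(j - t)) * b^t"
        using power_split[of t j b] 3 by simp
      moreover have "q * b^(j - t) mod b = 0"
        using digit_vanishes_below[of 0 "j - t" q b] 3 by simp
      ultimately show ?thesis
        using 3 digit_eq[of ?K "p * b^i" "q * b^(j - t)" b t]
          less_power_if_less_base[of p b i t] assms by simp
    next
      case 4
      then show ?thesis
        using digit_eq[of ?K "p * b^i" q b t] less_power_if_less_base[of p b i t] assms by simp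
    next
      case 5
      have "?K < b^j + q * b^j"
        using less_power_if_less_base[of p b i j] assms by simp
      also have "\<dots> \<le> b^t"
        using less_power_if_less_base[of "Suc q" b j t] 5 assms by simp
      finally show ?thesis
        using 5 assms by simp
    qed
  qed
  then show ?thesis
    unfolding digit_support_def using assms by auto
qed

lemma digit_support_two:
  fixes b p q :: nat
  assumes "0 < p" "0 < q" "p + q < b"
  shows "digit_support b (p * b^i + q * b^j) = {i, j}"
proof (cases i j rule: linorder_cases)
  case equal
  then show ?thesis
    using digit_support_single[of "p + q" b i] assms by (simp add: algebra_simps)
next
  case greater
  then show ?thesis
    using digit_support_two_less[of q p b j i] assms by (simp add: add.commute insert_commute)
qed (use digit_support_two_less assms in simp)

lemma sum_two_powers_ne_power:
  fixes b p q :: nat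
  assumes "0 < p" "0 < q" "p + q < b"
  shows "p * b^i + q * b^j \<noteq> b^s"
proof
  assume eq: "p * b^i + q * b^j = b^s"
  have "{i, j} = {s}"
    using digit_support_two[OF assms, of i j] digit_support_single[of 1 b s] assms eq by simp
  then have "(p + q) * b^s = 1 * b^s"
    using eq by (simp add: algebra_simps)
  then show False
    using assms by simp
qed

section \<open>Degree windows\<close>

locale degree_windows =
  fixes I :: "nat set" and V :: "nat \<Rightarrow> nat set" and E :: "nat \<Rightarrow> nat \<Rightarrow> nat \<Rightarrow> bool"
    and M W :: nat
  assumes gap: "8 * W \<le> M"
    and window: "\<And>i u. i \<in> I \<Longrightarrow> u \<in> V i \<Longrightarrow>
                   M * 5^i \<le> deg (V i) (E i) u \<and> deg (V i) (E i) u < M * 5^i + W"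
begin

lemma deg_div:
  assumes "t \<in> I" "w \<in> V t"
  shows "deg (V t) (E t) w div M = 5^t"
  using window[OF assms] gap by (intro div_nat_eqI) (simp_all add: mult.commute)

lemma degsum_div:
  assumes "i \<in> I" "j \<in> I" "x \<in> degsums (V i) (E i) (V j) (E j)"
  shows "\<exists>p q. 0 < p \<and> 0 < q \<and> p + q < (5::nat) \<and> x div M = p * 5^i + q * 5^j"
proof -
  have sum_div: "x div M = p * 5^i + q * 5^j"
    if "p * (M * 5^i) + q * (M * 5^j) \<le> x" "x < p * (M * 5^i) + q * (M * 5^j) + 4 * W" for p q
  proof (rule div_nat_eqI)
    have "M * (p * 5^i + q * 5^j) = p * (M * 5^i) + q * (M * 5^j)"
      by (simp add: algebra_simps)
    then show "M * (p * 5^i + q * 5^j) \<le> x" "x < M * Suc (p * 5^i + q * 5^j)"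
      using that gap by simp_all
  qed
  have lo: "M * 5^k \<le> deg (V k) (E k) u" and hi: "deg (V k) (E k) u < M * 5^k + W"
    if "k \<in> {i, j}" "u \<in> V k" for k u
    using window[of k u] that assms by auto
  from assms(3) show ?thesis
    unfolding degsums_def
  proof (elim UnE CollectE exE conjE)
    fix u u' v v'
    assume "x = deg (V i) (E i) u + deg (V i) (E i) u' + deg (V j) (E j) v + deg (V j) (E j) v'"
      "u \<in> V i" "u' \<in> V i" "v \<in> V j" "v' \<in> V j"
    then have "x div M = 2 * 5^i + 2 * 5^j"
      using lo[of i u] lo[of i u'] lo[of j v] lo[of j v'] hi[of i u] hi[of i u'] hi[of j v] hi[of j v']
      by (intro sum_div) simp_all
    then show ?thesis
      by (intro exI[of _ 2]) simp
  next
    fix u u' v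
    assume "x = deg (V i) (E i) u + deg (V i) (E i) u' + deg (V j) (E j) v"
      "u \<in> V i" "u' \<in> V i" "v \<in> V j"
    then have "x div M = 2 * 5^i + 1 * 5^j"
      using lo[of i u] lo[of i u'] lo[of j v] hi[of i u] hi[of i u'] hi[of j v]
      by (intro sum_div) simp_all
    then show ?thesis
      by (intro exI[of _ 2] exI[of _ 1]) simp
  next
    fix u v
    assume "x = deg (V i) (E i) u + deg (V j) (E j) v" "u \<in> V i" "v \<in> V j"
    then have "x div M = 1 * 5^i + 1 * 5^j"
      using lo[of i u] lo[of j v] hi[of i u] hi[of j v]
      by (intro sum_div) simp_all
    then show ?thesis
      by (intro exI[of _ 1]) simp
  qed
qed

lemma degsum_digit_support:
  assumes "i \<in> I" "j \<in> I" "x \<in> degsums (V i) (E i) (V j) (E j)"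
  shows "digit_support 5 (x div M) = {i, j}"
  using degsum_div[OF assms] digit_support_two by auto

lemma deg_increasing:
  "\<forall>i\<in>I. \<forall>j\<in>I. i < j \<longrightarrow> (\<forall>u\<in>V i. \<forall>v\<in>V j. deg (V i) (E i) u < deg (V j) (E j) v)"
proof (intro ballI impI)
  fix i j u v assume "i \<in> I" "j \<in> I" "i < j" "u \<in> V i" "v \<in> V j"
  have "M * 5^i + M * 5^i \<le> M * 5^(Suc i)"
    by simp
  also have "\<dots> \<le> M * 5^j"
    using \<open>i < j\<close> by (intro mult_left_mono power_increasing) auto
  finally have "M * 5^i + M \<le> M * 5^j"
    by (metis add_left_mono le_trans mult_le_mono2 mult.right_neutral one_le_power one_le_numeral)
  then show "deg (V i) (E i) u < deg (V j) (E j) v"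
    using window[OF \<open>i \<in> I\<close> \<open>u \<in> V i\<close>] window[OF \<open>j \<in> I\<close> \<open>v \<in> V j\<close>] gap by linarith
qed

lemma degsums_disjoint:
  "\<forall>i\<in>I. \<forall>j\<in>I. \<forall>i'\<in>I. \<forall>j'\<in>I. {i, j} \<noteq> {i', j'} \<longrightarrow>
     degsums (V i) (E i) (V j) (E j) \<inter> degsums (V i') (E i') (V j') (E j') = {}"
proof (intro ballI impI)
  fix i j i' j' assume "i \<in> I" "j \<in> I" "i' \<in> I" "j' \<in> I" "{i, j} \<noteq> {i', j'}"
  then show "degsums (V i) (E i) (V j) (E j) \<inter> degsums (V i') (E i') (V j') (E j') = {}"
    using degsum_digit_support[of i j] degsum_digit_support[of i' j'] by (metis IntE equals0I)
qed

lemma degsums_disjoint_degrees: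
  "(\<Union>i\<in>I. \<Union>j\<in>I. degsums (V i) (E i) (V j) (E j))
     \<inter> {deg (V t) (E t) w | t w. t \<in> I \<and> w \<in> V t} = {}"
proof (rule equals0I)
  fix x assume "x \<in> (\<Union>i\<in>I. \<Union>j\<in>I. degsums (V i) (E i) (V j) (E j))
     \<inter> {deg (V t) (E t) w | t w. t \<in> I \<and> w \<in> V t}"
  then obtain i j t w where "i \<in> I" "j \<in> I" "x \<in> degsums (V i) (E i) (V j) (E j)"
    and "t \<in> I" "w \<in> V t" "x = deg (V t) (E t) w"
    by blast
  then obtain p q :: nat where "0 < p" "0 < q" "p + q < 5" "p * 5^i + q * 5^j = 5^t"
    using degsum_div deg_div by metis
  then show False
    using sum_two_powers_ne_power by blast
qed

end

text \<open>Take the least admissible \<open>n\<close>: the failure at \<open>n - 1\<close> caps \<open>nverts n\<close>.\<close>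
lemma exists_size_with_degree_window:
  assumes "400 \<le> Q" "T + 50 * Q < nverts Q"
  obtains n where "100 \<le> n" "T + 50 * n < nverts n" "nverts n \<le> T + 54 * Q"
proof -
  define P where "P k \<longleftrightarrow> 100 \<le> k \<and> T + 50 * k < nverts k" for k
  define n where "n = (LEAST k. P k)"
  have "P Q"
    using assms by (simp add: P_def)
  then have "P n" "n \<le> Q"
    unfolding n_def by (auto intro: LeastI Least_le)
  have "nverts n \<le> T + 54 * Q"
  proof (cases "n = 100")
    case True
    then show ?thesis
      using assms by (simp add: nverts_def)
  next
    case False
    then obtain x where "n = Suc x" "100 \<le> x"
      using \<open>P n\<close> by (cases n) (auto simp: P_def)
    then have "\<not> P x"
      using not_less_Least[of x P] unfolding n_def by simp
    then have "2*x*x + 8*x + 1 \<le> T + 50*x"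
      using \<open>100 \<le> x\<close> by (simp add: P_def nverts_def)
    moreover have "nverts n = 2*x*x + 12*x + 11"
      using \<open>n = Suc x\<close> by (simp add: nverts_def algebra_simps)
    moreover have "x < Q"
      using \<open>n \<le> Q\<close> \<open>n = Suc x\<close> by simp
    ultimately show ?thesis
      by linarith
  qed
  then show thesis
    using that \<open>P n\<close> unfolding P_def by blast
qed

lemma sizes_with_degree_windows:
  fixes Q l :: nat
  assumes "400 \<le> Q" "432 * 5^l + 42 \<le> 2 * Q"
  obtains nn where "\<forall>i\<le>l. 100 \<le> nn i \<and> 432 * Q * 5^i + 50 * nn i < nverts (nn i)
                          \<and> nverts (nn i) \<le> 432 * Q * 5^i + 54 * Q \<and> Q < nverts (nn i)"
proof -
  have "\<exists>n. 100 \<le> n \<and> 432 * Q * 5^i + 50 * n < nverts n \<and> nverts n \<le> 432 * Q * 5^i + 54 * Q"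
    if "i \<le> l" for i
  proof -
    have "(5::nat)^i \<le> 5^l"
      using that by (intro power_increasing) simp_all
    then have "432 * Q * 5^i \<le> 432 * 5^l * Q"
      by simp
    moreover have "(432 * 5^l + 42) * Q \<le> 2 * Q * Q"
      using assms(2) by (intro mult_right_mono) simp_all
    moreover have "(432 * 5^l + 42) * Q = 432 * 5^l * Q + 42 * Q"
      by (simp add: algebra_simps)
    ultimately have "432 * Q * 5^i + 50 * Q < nverts Q"
      unfolding nverts_def by linarith
    then obtain n where "100 \<le> n" "432 * Q * 5^i + 50 * n < nverts n" "nverts n \<le> 432 * Q * 5^i + 54 * Q"
      by (rule exists_size_with_degree_window[OF assms(1)])
    then show ?thesis
      by blast
  qed
  then have "\<forall>i. \<exists>n. i \<le> l \<longrightarrow> 100 \<le> n \<and> 432 * Q * 5^i + 50 * n < nverts n \<and> nverts n \<le> 432 * Q * 5^i + 54 * Q"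
    by blast
  from choice[OF this] obtain nn where
    nn: "\<forall>i. i \<le> l \<longrightarrow> 100 \<le> nn i \<and> 432 * Q * 5^i + 50 * nn i < nverts (nn i) \<and> nverts (nn i) \<le> 432 * Q * 5^i + 54 * Q"
    by blast
  moreover have "Q \<le> 432 * Q * 5^i" for i
    using mult_le_mono2[of 1 "432 * 5^i" Q] by (simp add: mult.commute mult.left_commute)
  ultimately have "\<forall>i\<le>l. 100 \<le> nn i \<and> 432 * Q * 5^i + 50 * nn i < nverts (nn i)
                          \<and> nverts (nn i) \<le> 432 * Q * 5^i + 54 * Q \<and> Q < nverts (nn i)"
    using le_less_trans[OF _ le_less_trans[OF le_add1]] by blast
  then show thesis
    by (rule that)
qed

lemma degree_windows_G:
  assumes "8 * W \<le> M"
    and "\<And>i. i \<in> I \<Longrightarrow> 7 \<le> nn i"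
    and lo: "\<And>i. i \<in> I \<Longrightarrow> M * 5^i + 50 * nn i < nverts (nn i)"
    and hi: "\<And>i. i \<in> I \<Longrightarrow> nverts (nn i) \<le> M * 5^i + W"
  shows "degree_windows I (\<lambda>i. {..<nverts (nn i)}) (\<lambda>i. G_edge (nn i)) M W"
proof
  show "8 * W \<le> M"
    by fact
  fix i u assume "i \<in> I" "u \<in> {..<nverts (nn i)}"
  then have "nverts (nn i) \<le> deg {..<nverts (nn i)} (G_edge (nn i)) u + 50 * nn i + 1"
    "deg {..<nverts (nn i)} (G_edge (nn i)) u < nverts (nn i)"
    using deg_G_window[of "nn i" u] assms(2) by simp_all
  then show "M * 5^i \<le> deg {..<nverts (nn i)} (G_edge (nn i)) u
      \<and> deg {..<nverts (nn i)} (G_edge (nn i)) u < M * 5^i + W"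
    using lo[OF \<open>i \<in> I\<close>] hi[OF \<open>i \<in> I\<close>] by linarith
qed

theorem mainTheorem10:
  fixes l n0 :: nat
  shows "\<exists>(V :: nat \<Rightarrow> nat set) (E :: nat \<Rightarrow> nat \<Rightarrow> nat \<Rightarrow> bool) (a :: nat \<Rightarrow> nat) (b :: nat \<Rightarrow> nat).
    (\<forall>i\<in>{1..l}. simple_graph (V i) (E i) \<and> E i (a i) (b i) \<and> card (V i) \<ge> n0)
  \<and> (\<forall>i\<in>{1..l}. rigid (V i) (E i))
  \<and> (\<forall>i\<in>{1..l}. \<forall>u\<in>V i. \<forall>v\<in>V i. u \<noteq> v \<longrightarrow>
       (\<exists>x y z. x \<in> nbhd (V i) (E i) u \<inter> nbhd (V i) (E i) v
              \<and> y \<in> nbhd (V i) (E i) u \<inter> nbhd (V i) (E i) v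
              \<and> z \<in> nbhd (V i) (E i) u \<inter> nbhd (V i) (E i) v
              \<and> E i x y \<and> E i x z \<and> E i y z))
  \<and> (\<forall>i\<in>{1..l}. nbhd (V i) (E i) (a i) - nbhd (V i) (E i) (b i) \<noteq> {}
                \<and> nbhd (V i) (E i) (b i) - nbhd (V i) (E i) (a i) \<noteq> {})
  \<and> (\<forall>i\<in>{1..l}. deg (V i) (E i) (a i) < deg (V i) (E i) (b i))
  \<and> (\<forall>i\<in>{1..l}. \<forall>j\<in>{1..l}. i < j \<longrightarrow>
       (\<forall>u\<in>V i. \<forall>v\<in>V j. deg (V i) (E i) u < deg (V j) (E j) v))
  \<and> (\<forall>i\<in>{1..l}. \<forall>j\<in>{1..l}. \<forall>i'\<in>{1..l}. \<forall>j'\<in>{1..l}. {i, j} \<noteq> {i', j'} \<longrightarrow>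
       degsums (V i) (E i) (V j) (E j) \<inter> degsums (V i') (E i') (V j') (E j') = {})
  \<and> (\<Union>i\<in>{1..l}. \<Union>j\<in>{1..l}. degsums (V i) (E i) (V j) (E j))
       \<inter> {deg (V t) (E t) w | t w. t \<in> {1..l} \<and> w \<in> V t} = {}
  \<and> (\<forall>i\<in>{1..l}. \<exists>S. S \<subseteq> V i - {a i, b i}
       \<and> (\<forall>u\<in>S. \<forall>v\<in>V i - S. deg (V i) (E i) u > deg (V i) (E i) v)
       \<and> (\<forall>u\<in>S. \<forall>v\<in>S. u \<noteq> v \<longrightarrow> deg (V i) (E i) u \<noteq> deg (V i) (E i) v)
       \<and> (\<forall>u\<in>V i - S. \<forall>v\<in>V i - S. u \<noteq> v \<longrightarrow>
            nbhd (V i) (E i) u \<inter> S \<noteq> nbhd (V i) (E i) v \<inter> S))"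
proof -
  define Q where "Q = 216 * 5^l + n0 + 400"
  have "400 \<le> Q" "432 * 5^l + 42 \<le> 2 * Q"
    by (simp_all add: Q_def)
  then obtain nn where nn: "\<forall>i\<le>l. 100 \<le> nn i \<and> 432 * Q * 5^i + 50 * nn i < nverts (nn i)
                                \<and> nverts (nn i) \<le> 432 * Q * 5^i + 54 * Q \<and> Q < nverts (nn i)"
    by (rule sizes_with_degree_windows)
  define V where "V = (\<lambda>i. {..<nverts (nn i)})"
  define E where "E = (\<lambda>i. G_edge (nn i))"
  define a where "a = (\<lambda>i. 8 * nn i + 2 * band (nn i))"
  define b where "b = (\<lambda>i. 8 * nn i)"
  interpret degree_windows "{1..l}" V E "432 * Q" "54 * Q"
    unfolding V_def E_def using nn by (intro degree_windows_G) auto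
  have admissible: "\<forall>i\<in>{1..l}. admissible_rooted_graph (V i) (E i) (a i) (b i)"
    using admissible_rooted_graph_G nn by (simp add: V_def E_def a_def b_def)
  have large: "\<forall>i\<in>{1..l}. n0 \<le> card (V i)"
    using nn by (fastforce simp: V_def Q_def)
  show ?thesis
    apply (rule exI[of _ V], rule exI[of _ E], rule exI[of _ a], rule exI[of _ b])
    using admissible large deg_increasing degsums_disjoint degsums_disjoint_degrees
    unfolding admissible_rooted_graph_def ball_conj_distrib
    by (intro conjI) ((elim conjE)?, assumption)+
qed

end
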